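(* Consider an imprecise hidden Markov model as in the context with fixed output sequence $o_{1:n}$, under the positivity assumption. Let $k\in\{1,\dots,n-1\}$ and $z_{k-1}\in\mathcal{X}_{k-1}$. Then the set of state sequences produced by the optimal tree construction (described in the context) from the candidate set $\mathrm{Mog}(\mathcal{X}_{k:n}\mid z_{k-1},o_{k:n})$ is exactly $\mathrm{opt}(\mathcal{X}_{k:n}\mid z_{k-1},o_{k:n})$.
   Context: Setting: $n\ge1$; $\mathcal{X}_0=\{x_0\}$ a singleton; finite non-empty $\mathcal{X}_1,\dots,\mathcal{X}_n$, $\mathcal{O}_1,\dots,\mathcal{O}_n$; $\mathcal{X}_{k:\ell}=\times_{r=k}^\ell\mathcal{X}_r$, similarly $\mathcal{O}_{k:\ell}$; $\oplus$ denotes concatenation of sequences. Coherent lower previsions $\underline{P}$ satisfy $\underline{P}(f)\ge\min f$, $\underline{P}(\lambda f)=\lambda\underline{P}(f)$ ($\lambda\ge0$), $\underline{P}(f+g)\ge\underline{P}(f)+\underline{P}(g)$; $\overline{P}(f)=-\underline{P}(-f)$; $\underline{P}(A)=\underline{P}(\mathbb{I}_A)$. Local models: coherent $\underline{Q}_k(\cdot\mid z_{k-1})$ on gambles on $\mathcal{X}_k$ and $\underline{S}_k(\cdot\mid z_k)$ on gambles on $\mathcal{O}_k$. Joint models: $\underline{E}_n(\cdot\mid z_n):=\underline{S}_n(\cdot\mid z_n)$; for $k<n$, $\underline{E}_k(\cdot\mid X_k)$ is the conditionally independent natural extension of $\underline{S}_k(\cdot\mid X_k)$ and $\underline{P}_{k+1}(\cdot\mid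 X_k)$ (pointwise smallest separately coherent conditional lower prevision on gambles on $\mathcal{X}_{k+1:n}\times\mathcal{O}_{k:n}$ jointly coherent with and extending both, such that given $X_k$, $O_k$ and $(X_{k+1:n},O_{k+1:n})$ are mutually epistemically irrelevant); $\underline{P}_k(f\mid z_{k-1}):=\underline{Q}_k\big(\sum_{z_k}\mathbb{I}_{\{z_k\}}\underline{E}_k(f(z_k,\cdot)\mid z_k)\mid z_{k-1}\big)$. Positivity assumption: $\overline{Q}_k(\{z_k\}\mid z_{k-1})>0$, $\overline{S}_k(\{o_k\}\mid z_k)>0$ for all arguments. $\mathrm{opt}(\mathcal{X}_{k:n}\mid z_{k-1},o_{k:n})$ is the set of $\hat{x}_{k:n}$ with $\underline{P}_k(\mathbb{I}_{o_{k:n}}[\mathbb{I}_{x_{k:n}}-\mathbb{I}_{\hat{x}_{k:n}}]\mid z_{k-1})\le0$ for all $x_{k:n}\in\mathcal{X}_{k:n}$. Auxiliary quantities (for the fixed $o_{1:n}$): for $z_{k:n}\in\mathcal{X}_{k:n}$, $\alpha_k(z_{k:n}):=\overline{S}_k(\{o_k\}\mid z_k)\prod_{i=k+1}^n\overline{S}_i(\{o_i\}\mid z_i)\overline{Q}_i(\{z_i\}\mid z_{i-1})$ and $\beta_k(z_{k:n})$ the same with lower instead of upper previsions; $\alpha^{\max}_k(x_k):=\max\{\alpha_k(z_{k:n}):z_k=x_k\}$, $\beta^{\max}_k(x_k):=\max\{\beta_k(z_{k:n}):z_k=x_k\}$; threshold $\tau_k(x_k,\hat{x}_k\mid z_{k-1}):=\min\{a\ge0:\underline{Q}_k(\mathbb{I}_{\{x_k\}}-a\mathbb{I}_{\{\hat{x}_k\}}\mid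 z_{k-1})\le0\}$; $\alpha^{\mathrm{opt}}_k(\hat{x}_k\mid z_{k-1}):=\max_{x_k\neq\hat{x}_k}\beta^{\max}_k(x_k)\tau_k(x_k,\hat{x}_k\mid z_{k-1})$, and recursively for $s\in\{k+1,\dots,n\}$, $\alpha^{\mathrm{opt}}_k(z_{k:s}\mid z_{k-1}):=\alpha^{\mathrm{opt}}_k(z_{k:s-1}\mid z_{k-1})/\big(\overline{S}_{s-1}(\{o_{s-1}\}\mid z_{s-1})\overline{Q}_s(\{z_s\}\mid z_{s-1})\big)$, with $\alpha^{\mathrm{opt}}_k(z_{k:k}\mid z_{k-1}):=\alpha^{\mathrm{opt}}_k(z_k\mid z_{k-1})$. Let $\mathrm{Pos}_k(z_{k-1}):=\{z_k\in\mathcal{X}_k:\underline{Q}_k(\{z_k\}\mid z_{k-1})>0\text{ and }\underline{S}_k(\{o_k\}\mid z_k)>0\}$, and for $k<n$ define the candidate set $\mathrm{Mog}(\mathcal{X}_{k:n}\mid z_{k-1},o_{k:n}):=\bigcup_{z_k\in\mathrm{Pos}_k(z_{k-1})}z_k\oplus\mathrm{opt}(\mathcal{X}_{k+1:n}\mid z_k,o_{k+1:n})\ \cup\ \bigcup_{z_k\notin\mathrm{Pos}_k(z_{k-1})}z_k\oplus\mathcal{X}_{k+1:n}$. Optimal tree construction (for fixed $k<n$, $z_{k-1}$): first keep the states $\hat{x}_k\in\mathcal{X}_k$ with $\alpha^{\max}_k(\hat{x}_k)\ge\alpha^{\mathrm{opt}}_k(\hat{x}_k\mid z_{k-1})$.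 Then for $s=k+1,\dots,n$ in turn, for every kept prefix $\hat{x}_{k:s-1}$, keep the extensions $\hat{x}_{k:s-1}\oplus x_s$ ($x_s\in\mathcal{X}_s$) such that some element of $\mathrm{Mog}(\mathcal{X}_{k:n}\mid z_{k-1},o_{k:n})$ begins with $\hat{x}_{k:s-1}\oplus x_s$ and $\alpha^{\max}_s(x_s)\ge\alpha^{\mathrm{opt}}_k(\hat{x}_{k:s-1}\oplus x_s\mid z_{k-1})$. The output is the set of kept sequences of length $n-k+1$. *)

theory Defs
  imports Main "HOL-Library.Indicator_Function"
begin

text \<open>Gambles are real-valued functions; a lower prevision on gambles on a finite
carrier A is a functional on functions, whose values only matter on A.\<close>

definition coherent_lp :: "'a set \<Rightarrow> (('a \<Rightarrow> real) \<Rightarrow> real) \<Rightarrow> bool" where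
  "coherent_lp A P \<longleftrightarrow>
     (\<forall>f. P f \<ge> (INF x\<in>A. f x)) \<and>
     (\<forall>(l::real) f. l \<ge> 0 \<longrightarrow> P (\<lambda>x. l * f x) = l * P f) \<and>
     (\<forall>f g. P (\<lambda>x. f x + g x) \<ge> P f + P g)"

definition upper :: "(('a \<Rightarrow> real) \<Rightarrow> real) \<Rightarrow> ('a \<Rightarrow> real) \<Rightarrow> real" where
  "upper P f = - P (\<lambda>x. - f x)"

text \<open>Walley's (joint) coherence of finitely many separately specified conditional
lower previsions, all defined on all gambles on a finite space.  Each conditional
lower prevision is given by its partition (a set of cells) and the map
B, f |-> P(f|B).\<close>

definition gain :: "('w set \<Rightarrow> ('w \<Rightarrow> real) \<Rightarrow> real) \<Rightarrow> 'w set \<Rightarrow> ('w \<Rightarrow> real) \<Rightarrow> 'w \<Rightarrow> real" where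
  "gain P B f w = indicator B w * (f w - P B f)"

definition walley_coherent ::
  "('w set set \<times> ('w set \<Rightarrow> ('w \<Rightarrow> real) \<Rightarrow> real)) list \<Rightarrow> bool" where
  "walley_coherent L \<longleftrightarrow>
    (\<forall>(fs :: nat \<Rightarrow> 'w \<Rightarrow> real) j0 f0 B0. j0 < length L \<longrightarrow> B0 \<in> fst (L ! j0) \<longrightarrow>
       (\<exists>w \<in> B0 \<union> (\<Union>j<length L. \<Union>{B \<in> fst (L ! j). \<exists>v\<in>B. fs j v \<noteq> 0}).
          (\<Sum>j<length L. \<Sum>B\<in>fst (L ! j). gain (snd (L ! j)) B (fs j) w)
            - gain (snd (L ! j0)) B0 f0 w \<ge> 0))"

definition cells :: "'w set \<Rightarrow> ('w \<Rightarrow> 'k) \<Rightarrow> 'w set set" where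
  "cells \<Omega> key = (\<lambda>w. {v \<in> \<Omega>. key v = key w}) ` \<Omega>"

text \<open>An imprecise HMM: length n, state spaces X_k (X_0 = {x0}), output spaces O_k,
local transition models Q_k(.|z_{k-1}) and emission models S_k(.|z_k).\<close>

record ('x, 'o) ihmm =
  len :: nat
  st  :: "nat \<Rightarrow> 'x set"
  out :: "nat \<Rightarrow> 'o set"
  Qm  :: "nat \<Rightarrow> 'x \<Rightarrow> ('x \<Rightarrow> real) \<Rightarrow> real"
  Sm  :: "nat \<Rightarrow> 'x \<Rightarrow> ('o \<Rightarrow> real) \<Rightarrow> real"

text \<open>Sequences z_{k:n} as lists of length n-k+1 (index i holds the (k+i)-th entry).\<close>
definition xseq :: "('x,'o) ihmm \<Rightarrow> nat \<Rightarrow> 'x list set" where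
  "xseq M k = {xs. length xs = Suc (len M) - k \<and> (\<forall>i<length xs. xs ! i \<in> st M (k + i))}"

definition oseq :: "('x,'o) ihmm \<Rightarrow> nat \<Rightarrow> 'o list set" where
  "oseq M k = {os. length os = Suc (len M) - k \<and> (\<forall>i<length os. os ! i \<in> out M (k + i))}"

definition Omega :: "('x,'o) ihmm \<Rightarrow> nat \<Rightarrow> ('x list \<times> 'o list) set" where
  "Omega M k = xseq M k \<times> oseq M k"

text \<open>Candidates for E_k(.|X_k) (k < n), given P_{k+1}(.|X_k) as P1.  A conditional
lower prevision E(.|X_k) is represented by E z f for z in X_k and gambles f on
X_{k:n} x O_{k:n} (only the values on the cell X_k = z matter, by separate coherence).
Conditions: separate coherence; extension of S_k(.|X_k) and P_{k+1}(.|X_k);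
Walley-joint coherence with S_k(.|X_k, X_{k+1:n}, O_{k+1:n}) := S_k(.|X_k) and
P_{k+1}(.|X_k, O_k) := P_{k+1}(.|X_k) (mutual epistemic irrelevance given X_k).\<close>

definition ine_cand ::
  "('x,'o) ihmm \<Rightarrow> nat \<Rightarrow> ('x \<Rightarrow> ('x list \<times> 'o list \<Rightarrow> real) \<Rightarrow> real)
     \<Rightarrow> ('x \<Rightarrow> ('x list \<times> 'o list \<Rightarrow> real) \<Rightarrow> real) \<Rightarrow> bool" where
  "ine_cand M k P1 E \<longleftrightarrow>
     (\<forall>z\<in>st M k. coherent_lp {w \<in> Omega M k. hd (fst w) = z} (E z)) \<and>
     (\<forall>z\<in>st M k. \<forall>h. E z (\<lambda>w. h (hd (snd w))) = Sm M k z h) \<and>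
     (\<forall>z\<in>st M k. \<forall>h. E z (\<lambda>w. h (tl (fst w), tl (snd w))) = P1 z h) \<and>
     walley_coherent
       [ (cells (Omega M k) (\<lambda>w. hd (fst w)),
           \<lambda>B f. E (hd (fst (SOME w. w \<in> B))) f),
         (cells (Omega M k) (\<lambda>w. (hd (fst w), tl (fst w), tl (snd w))),
           \<lambda>B f. (let w = SOME w. w \<in> B in
                   Sm M k (hd (fst w)) (\<lambda>u. f (fst w, u # tl (snd w))))),
         (cells (Omega M k) (\<lambda>w. (hd (fst w), hd (snd w))),
           \<lambda>B f. (let w = SOME w. w \<in> B in
                   P1 (hd (fst w)) (\<lambda>v. f (hd (fst w) # fst v, hd (snd w) # snd v)))) ]"

text \<open>E_k(.|X_k): E_n = S_n; for k < n the conditionally independent natural extension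
(pointwise smallest candidate) of S_k(.|X_k) and P_{k+1}(.|X_k), where
P_{k+1}(f|z_k) = Q_{k+1}(E_{k+1}(f|.)|z_k).\<close>

function Efun :: "('x,'o) ihmm \<Rightarrow> nat \<Rightarrow> 'x \<Rightarrow> ('x list \<times> 'o list \<Rightarrow> real) \<Rightarrow> real" where
  "Efun M k = (if len M \<le> k then (\<lambda>z f. Sm M (len M) z (\<lambda>u. f ([z], [u])))
     else (\<lambda>z f. Inf {E z f | E. ine_cand M k
              (\<lambda>z' g. Qm M (Suc k) z' (\<lambda>y. Efun M (Suc k) y g)) E}))"
  by pat_completeness auto
termination by (relation "measure (\<lambda>(M, k). len M - k)") auto

definition Pk :: "('x,'o) ihmm \<Rightarrow> nat \<Rightarrow> 'x \<Rightarrow> ('x list \<times> 'o list \<Rightarrow> real) \<Rightarrow> real" where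
  "Pk M k z f = Qm M k z (\<lambda>y. Efun M k y f)"

text \<open>ob k is the fixed observed output o_k; ovec ob k n is o_{k:n}.\<close>
definition ovec :: "('x,'o) ihmm \<Rightarrow> (nat \<Rightarrow> 'o) \<Rightarrow> nat \<Rightarrow> 'o list" where
  "ovec M ob k = map ob [k..<Suc (len M)]"

definition opt :: "('x,'o) ihmm \<Rightarrow> (nat \<Rightarrow> 'o) \<Rightarrow> nat \<Rightarrow> 'x \<Rightarrow> 'x list set" where
  "opt M ob k z = {xh \<in> xseq M k. \<forall>x \<in> xseq M k.
      Pk M k z (\<lambda>w. indicator {ovec M ob k} (snd w) *
                      (indicator {x} (fst w) - indicator {xh} (fst w))) \<le> 0}"

text \<open>alpha_k(z_{k:n}) and beta_k(z_{k:n}); zs ! (i - k) is z_i.\<close>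
definition alpha :: "('x,'o) ihmm \<Rightarrow> (nat \<Rightarrow> 'o) \<Rightarrow> nat \<Rightarrow> 'x list \<Rightarrow> real" where
  "alpha M ob k zs = upper (Sm M k (zs ! 0)) (indicator {ob k}) *
     (\<Prod>i\<in>{Suc k..len M}. upper (Sm M i (zs ! (i - k))) (indicator {ob i}) *
                          upper (Qm M i (zs ! (i - k - 1))) (indicator {zs ! (i - k)}))"

definition beta :: "('x,'o) ihmm \<Rightarrow> (nat \<Rightarrow> 'o) \<Rightarrow> nat \<Rightarrow> 'x list \<Rightarrow> real" where
  "beta M ob k zs = Sm M k (zs ! 0) (indicator {ob k}) *
     (\<Prod>i\<in>{Suc k..len M}. Sm M i (zs ! (i - k)) (indicator {ob i}) *
                          Qm M i (zs ! (i - k - 1)) (indicator {zs ! (i - k)}))"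

definition amax :: "('x,'o) ihmm \<Rightarrow> (nat \<Rightarrow> 'o) \<Rightarrow> nat \<Rightarrow> 'x \<Rightarrow> real" where
  "amax M ob k x = Max {alpha M ob k zs | zs. zs \<in> xseq M k \<and> hd zs = x}"

definition bmax :: "('x,'o) ihmm \<Rightarrow> (nat \<Rightarrow> 'o) \<Rightarrow> nat \<Rightarrow> 'x \<Rightarrow> real" where
  "bmax M ob k x = Max {beta M ob k zs | zs. zs \<in> xseq M k \<and> hd zs = x}"

text \<open>Threshold tau_k(x_k, xh_k | z_{k-1}) (the min of a closed set, written as Inf).\<close>
definition tau :: "('x,'o) ihmm \<Rightarrow> nat \<Rightarrow> 'x \<Rightarrow> 'x \<Rightarrow> 'x \<Rightarrow> real" where
  "tau M k z x xh = Inf {a. a \<ge> 0 \<and>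
      Qm M k z (\<lambda>y. indicator {x} y - a * indicator {xh} y) \<le> 0}"

text \<open>alpha^opt_k(xh_k|z_{k-1}); the max over the empty set (|X_k| = 1) is taken to be 0
(all candidates are nonnegative, so inserting 0 changes nothing otherwise).\<close>
definition aopt1 :: "('x,'o) ihmm \<Rightarrow> (nat \<Rightarrow> 'o) \<Rightarrow> nat \<Rightarrow> 'x \<Rightarrow> 'x \<Rightarrow> real" where
  "aopt1 M ob k z xh = Max (insert 0
      {bmax M ob k x * tau M k z x xh | x. x \<in> st M k \<and> x \<noteq> xh})"

text \<open>alpha^opt_k(z_{k:s}|z_{k-1}) for a list zs = z_{k:s} (s = k + length zs - 1),
the recursion unfolded: divide by the factors for s' = k+1, ..., s.\<close>
definition aopt :: "('x,'o) ihmm \<Rightarrow> (nat \<Rightarrow> 'o) \<Rightarrow> nat \<Rightarrow> 'x \<Rightarrow> 'x list \<Rightarrow> real" where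
  "aopt M ob k z zs = aopt1 M ob k z (hd zs) /
     (\<Prod>s\<in>{Suc k..<k + length zs}.
        upper (Sm M (s - 1) (zs ! (s - 1 - k))) (indicator {ob (s - 1)}) *
        upper (Qm M s (zs ! (s - 1 - k))) (indicator {zs ! (s - k)}))"

definition Pos :: "('x,'o) ihmm \<Rightarrow> (nat \<Rightarrow> 'o) \<Rightarrow> nat \<Rightarrow> 'x \<Rightarrow> 'x set" where
  "Pos M ob k z = {zk \<in> st M k. Qm M k z (indicator {zk}) > 0 \<and>
                               Sm M k zk (indicator {ob k}) > 0}"

definition Mog :: "('x,'o) ihmm \<Rightarrow> (nat \<Rightarrow> 'o) \<Rightarrow> nat \<Rightarrow> 'x \<Rightarrow> 'x list set" where
  "Mog M ob k z =
     {zk # r | zk r. zk \<in> Pos M ob k z \<and> r \<in> opt M ob (Suc k) zk} \<union>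
     {zk # r | zk r. zk \<in> st M k - Pos M ob k z \<and> r \<in> xseq M (Suc k)}"

text \<open>The optimal tree construction: kept M ob k z j is the set of kept prefixes
xh_{k:k+j}.\<close>
primrec kept :: "('x,'o) ihmm \<Rightarrow> (nat \<Rightarrow> 'o) \<Rightarrow> nat \<Rightarrow> 'x \<Rightarrow> nat \<Rightarrow> 'x list set" where
  "kept M ob k z 0 = {[xh] | xh. xh \<in> st M k \<and> amax M ob k xh \<ge> aopt M ob k z [xh]}"
| "kept M ob k z (Suc j) =
     {p @ [x] | p x. p \<in> kept M ob k z j \<and> x \<in> st M (k + Suc j) \<and>
        (\<exists>m \<in> Mog M ob k z. take (length (p @ [x])) m = p @ [x]) \<and>
        amax M ob (k + Suc j) x \<ge> aopt M ob k z (p @ [x])}"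

definition tree_out :: "('x,'o) ihmm \<Rightarrow> (nat \<Rightarrow> 'o) \<Rightarrow> nat \<Rightarrow> 'x \<Rightarrow> 'x list set" where
  "tree_out M ob k z = kept M ob k z (len M - k)"

end

theory Submission
  imports Defs
begin

(* On the cell X_k = y, the conditionally independent natural extension factorises: for a gamble
   I_o(O_k) g(X_{k+1:n}, O_{k+1:n}) it equals S_k(c I_o | y) with c = P_{k+1}(g | y).  The upper
   bound holds because the lower envelope of the products of dominating linear previsions of
   S_k(.|y) and P_{k+1}(.|y) is itself a candidate (its Walley coherence is certified by product
   weights); the lower bound comes from Walley coherence of an arbitrary candidate applied to three
   telescoping gains.  By backward induction, E_k then sends I_{o_{k:n}} I_{z_{k:n}} to beta_k(z)
   and its negation to -alpha_k(z) on the cell of z_k, and every E_k is coherent with atoms of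
   positive upper probability.

   Hence optimality of xh against sequences with another first state reduces, via the threshold
   tau_k, to alpha^opt_k(xh_k) <= alpha_k(xh), and against sequences with the same first state to
   optimality of the tail, i.e. to membership in Mog.  Finally alpha_k factorises along the
   sequence and the divisors in alpha^opt_k telescope, so the pruning test at every level of the
   tree is implied by that single inequality, and at the last level it is the inequality itself. *)

section \<open>Coherent lower previsions on finite sets\<close>

lemma coherent_lpD:
  assumes "coherent_lp A P"
  shows "P f \<ge> (INF x\<in>A. f x)" "l \<ge> 0 \<Longrightarrow> P (\<lambda>x. l * f x) = l * P f"
    "P (\<lambda>x. f x + g x) \<ge> P f + P g"
  using assms unfolding coherent_lp_def by auto

lemma coherent_lp_scale_nonneg:
  assumes "coherent_lp A P" "0 \<le> c"
  shows "P (\<lambda>x. c * f x) = c * P f"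
  using coherent_lpD(2)[OF assms(1) assms(2)] .

lemma coherent_lp_zero:
  assumes "coherent_lp A P" shows "P (\<lambda>x. 0) = 0"
  using coherent_lp_scale_nonneg[OF assms, of 0 "\<lambda>x. 0"] by simp

lemma coherent_lp_ge:
  assumes "coherent_lp A P" "A \<noteq> {}" "\<And>x. x \<in> A \<Longrightarrow> c \<le> f x"
  shows "c \<le> P f"
proof -
  have "c \<le> (INF x\<in>A. f x)" using assms(2,3) by (intro cINF_greatest) auto
  also have "\<dots> \<le> P f" using coherent_lpD(1)[OF assms(1)] .
  finally show ?thesis .
qed

lemma coherent_lp_nonneg:
  assumes "coherent_lp A P" "A \<noteq> {}" "\<And>x. x \<in> A \<Longrightarrow> 0 \<le> f x"
  shows "0 \<le> P f"
  using coherent_lp_ge[OF assms] .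

lemma coherent_lp_mono:
  assumes "coherent_lp A P" "A \<noteq> {}" "\<And>x. x \<in> A \<Longrightarrow> f x \<le> g x"
  shows "P f \<le> P g"
proof -
  have "P (\<lambda>x. f x + (g x - f x)) \<ge> P f + P (\<lambda>x. g x - f x)" using coherent_lpD(3)[OF assms(1)] .
  moreover have "0 \<le> P (\<lambda>x. g x - f x)" using assms(3) by (intro coherent_lp_ge[OF assms(1,2)]) auto
  ultimately show ?thesis by simp
qed

lemma coherent_lp_cong:
  assumes "coherent_lp A P" "A \<noteq> {}" "\<And>x. x \<in> A \<Longrightarrow> f x = g x"
  shows "P f = P g"
  using coherent_lp_mono[OF assms(1,2), of f g] coherent_lp_mono[OF assms(1,2), of g f] assms(3)
  by fastforce

lemma coherent_lp_le_upper:
  assumes "coherent_lp A P" shows "P f \<le> upper P f"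
proof -
  have "P (\<lambda>x. f x + - f x) \<ge> P f + P (\<lambda>x. - f x)" using coherent_lpD(3)[OF assms] .
  then show ?thesis using coherent_lp_zero[OF assms] unfolding upper_def by simp
qed

lemma coherent_lp_const:
  assumes "coherent_lp A P" "A \<noteq> {}" shows "P (\<lambda>x. c) = c"
proof -
  have "c \<le> P (\<lambda>x. c)" by (rule coherent_lp_ge[OF assms]) auto
  moreover have "- c \<le> P (\<lambda>x. - c)" by (rule coherent_lp_ge[OF assms]) auto
  moreover have "P (\<lambda>x. c) \<le> upper P (\<lambda>x. c)" by (rule coherent_lp_le_upper[OF assms(1)])
  ultimately show ?thesis unfolding upper_def by simp
qed

lemma coherent_lp_scale_nonpos:
  assumes "coherent_lp A P" "c \<le> 0"
  shows "P (\<lambda>x. c * f x) = c * upper P f"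
  using coherent_lp_scale_nonneg[OF assms(1), of "- c" "\<lambda>x. - f x"] assms(2)
  unfolding upper_def by simp

lemma coherent_lp_add_le_upper:
  assumes "coherent_lp A Q"
  shows "Q (\<lambda>y. f y + g y) \<le> Q f + upper Q g"
  using coherent_lpD(3)[OF assms, of "\<lambda>y. f y + g y" "\<lambda>y. - g y"] unfolding upper_def by simp

lemma upper_le_const:
  assumes "coherent_lp A P" "A \<noteq> {}" "\<And>x. x \<in> A \<Longrightarrow> f x \<le> c"
  shows "upper P f \<le> c"
  unfolding upper_def using coherent_lp_ge[OF assms(1,2), of "-c" "\<lambda>x. - f x"] assms(3) by force

lemma upper_add_le:
  assumes "coherent_lp A P"
  shows "upper P (\<lambda>x. f x + g x) \<le> upper P f + upper P g"
  using coherent_lpD(3)[OF assms, of "\<lambda>x. - f x" "\<lambda>x. - g x"] unfolding upper_def by simp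

lemma upper_scale_nonneg:
  assumes "coherent_lp A P" "0 \<le> l"
  shows "upper P (\<lambda>x. l * f x) = l * upper P f"
  using coherent_lp_scale_nonneg[OF assms, of "\<lambda>x. - f x"] unfolding upper_def by simp

lemma upper_cong:
  assumes "coherent_lp A P" "A \<noteq> {}" "\<And>x. x \<in> A \<Longrightarrow> f x = g x"
  shows "upper P f = upper P g"
  unfolding upper_def using coherent_lp_cong[OF assms(1,2), of "\<lambda>x. - f x" "\<lambda>x. - g x"] assms(3)
  by simp

lemma cInf_image_mult_left:
  fixes g :: "'a \<Rightarrow> real"
  assumes "K \<noteq> {}" "bdd_below (g ` K)" "0 \<le> l"
  shows "Inf ((\<lambda>x. l * g x) ` K) = l * Inf (g ` K)"
proof (cases "l = 0")
  case True
  then show ?thesis using assms(1) by simp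
next
  case False
  then have l: "l > 0" using assms(3) by simp
  show ?thesis
  proof (rule antisym)
    have "l * Inf (g ` K) \<le> l * g x" if "x \<in> K" for x
      using cInf_lower[OF imageI[OF that] assms(2)] l by simp
    then show "l * Inf (g ` K) \<le> Inf ((\<lambda>x. l * g x) ` K)"
      using assms(1) by (intro cInf_greatest) auto
  next
    obtain c where "\<forall>x\<in>K. c \<le> g x" using assms(2) by (auto simp: bdd_below_def)
    then have bdd: "bdd_below ((\<lambda>x. l * g x) ` K)"
      using l by (auto simp: bdd_below_def intro!: exI[of _ "l * c"])
    have "Inf ((\<lambda>x. l * g x) ` K) / l \<le> g x" if "x \<in> K" for x
      using cInf_lower[OF imageI[OF that] bdd] l by (simp add: divide_le_eq mult.commute)
    then have "Inf ((\<lambda>x. l * g x) ` K) / l \<le> Inf (g ` K)"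
      using assms(1) by (intro cInf_greatest) auto
    then show "Inf ((\<lambda>x. l * g x) ` K) \<le> l * Inf (g ` K)"
      using l by (simp add: divide_le_eq mult.commute)
  qed
qed

lemma coherent_lp_Inf:
  assumes K: "K \<noteq> {}" and coh: "\<And>P. P \<in> K \<Longrightarrow> coherent_lp C P"
  shows "coherent_lp C (\<lambda>f. Inf ((\<lambda>P. P f) ` K))"
proof -
  have lb: "(INF x\<in>C. f x) \<le> P f" if "P \<in> K" for P f using coherent_lpD(1)[OF coh[OF that]] .
  have bdd: "bdd_below ((\<lambda>P. P f) ` K)" for f using lb by (auto simp: bdd_below_def)
  show ?thesis unfolding coherent_lp_def
  proof (intro conjI allI impI)
    fix f show "(INF x\<in>C. f x) \<le> Inf ((\<lambda>P. P f) ` K)" using K lb by (intro cInf_greatest) auto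
  next
    fix l :: real and f assume l: "0 \<le> l"
    have "(\<lambda>P. P (\<lambda>x. l * f x)) ` K = (\<lambda>P. l * P f) ` K"
      using coherent_lpD(2)[OF coh l] by (auto intro!: image_cong)
    then show "Inf ((\<lambda>P. P (\<lambda>x. l * f x)) ` K) = l * Inf ((\<lambda>P. P f) ` K)"
      using cInf_image_mult_left[OF K bdd l] by simp
  next
    fix f g
    have "Inf ((\<lambda>P. P f) ` K) + Inf ((\<lambda>P. P g) ` K) \<le> P (\<lambda>x. f x + g x)" if "P \<in> K" for P
      using cInf_lower[OF imageI[OF that] bdd, of f] cInf_lower[OF imageI[OF that] bdd, of g]
        coherent_lpD(3)[OF coh[OF that], of f g] by linarith
    then show "Inf ((\<lambda>P. P f) ` K) + Inf ((\<lambda>P. P g) ` K) \<le> Inf ((\<lambda>P. P (\<lambda>x. f x + g x)) ` K)"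
      using K by (intro cInf_greatest) auto
  qed
qed

lemma INF_le_finite:
  fixes f :: "'a \<Rightarrow> real"
  shows "finite A \<Longrightarrow> x \<in> A \<Longrightarrow> (INF y\<in>A. f y) \<le> f x"
  by (rule cINF_lower) (auto intro: bdd_below_finite)

section \<open>Dominating linear previsions\<close>

definition lin_prev :: "'a set \<Rightarrow> ('a \<Rightarrow> real) \<Rightarrow> ('a \<Rightarrow> real) \<Rightarrow> real" where
  "lin_prev A p f = (\<Sum>a\<in>A. p a * f a)"

definition dominates :: "'a set \<Rightarrow> (('a \<Rightarrow> real) \<Rightarrow> real) \<Rightarrow> ('a \<Rightarrow> real) \<Rightarrow> bool" where
  "dominates A P p \<longleftrightarrow> (\<forall>f. P f \<le> lin_prev A p f)"

lemma lin_prev_indicator: "finite A \<Longrightarrow> a \<in> A \<Longrightarrow> lin_prev A p (indicator {a}) = p a"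
  unfolding lin_prev_def by (simp add: indicator_def if_distrib sum.delta' cong: if_cong)

lemma lin_prev_neg_indicator:
  "finite A \<Longrightarrow> a \<in> A \<Longrightarrow> lin_prev A p (\<lambda>x. - indicator {a} x) = - p a"
  using lin_prev_indicator[of A a p] unfolding lin_prev_def by (simp add: sum_negf)

lemma lin_prev_deviation:
  assumes "(\<Sum>a\<in>A. p a) = 1"
  shows "(\<Sum>a\<in>A. p a * c * (h a - d)) = c * (lin_prev A p h - d)"
proof -
  have "(\<Sum>a\<in>A. p a * c * (h a - d)) = c * (\<Sum>a\<in>A. p a * h a) - c * d * (\<Sum>a\<in>A. p a)"
    by (simp add: algebra_simps sum_subtractf sum_distrib_left)
  then show ?thesis using assms unfolding lin_prev_def by (simp add: algebra_simps)
qed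

lemma sum_indicator_singleton:
  assumes "finite A"
  shows "(\<Sum>a\<in>A. r a * indicator {a} x) = (if x \<in> A then r x else (0::real))"
  using assms by (simp add: indicator_def if_distrib sum.delta cong: if_cong)

text \<open>One step of the Hahn-Banach extension, phrased via the graph \<open>D\<close> of a linear functional
  on a linear space of gambles: the value \<open>c\<close> to be assigned to the new direction \<open>e\<close> is
  squeezed between \<open>l - U (f - e)\<close> and \<open>U (f' + e) - l'\<close>.\<close>

context
  fixes U :: "('a \<Rightarrow> real) \<Rightarrow> real" and D :: "(real \<times> ('a \<Rightarrow> real)) set"
  assumes U_add: "\<And>f g. U (\<lambda>x. f x + g x) \<le> U f + U g"
    and U_scale: "\<And>c f. 0 \<le> c \<Longrightarrow> U (\<lambda>x. c * f x) = c * U f"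
    and D_add: "\<And>l f l' f'. (l, f) \<in> D \<Longrightarrow> (l', f') \<in> D \<Longrightarrow> (l + l', \<lambda>x. f x + f' x) \<in> D"
    and D_scale: "\<And>c l f. (l, f) \<in> D \<Longrightarrow> (c * l, \<lambda>x. c * f x) \<in> D"
    and D_le: "\<And>l f. (l, f) \<in> D \<Longrightarrow> l \<le> U f"
    and D_ne: "D \<noteq> {}"
begin

lemma sublinear_separating_value:
  obtains c where "\<And>l f. (l, f) \<in> D \<Longrightarrow> l - U (\<lambda>x. f x - e x) \<le> c"
    and "\<And>l f. (l, f) \<in> D \<Longrightarrow> c \<le> U (\<lambda>x. f x + e x) - l"
proof -
  define S1 where "S1 = {l - U (\<lambda>x. f x - e x) | l f. (l, f) \<in> D}"
  define S2 where "S2 = {U (\<lambda>x. f x + e x) - l | l f. (l, f) \<in> D}"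
  have sep: "a \<le> b" if ab: "a \<in> S1" "b \<in> S2" for a b
  proof -
    obtain l f where D1: "(l, f) \<in> D" and a: "a = l - U (\<lambda>x. f x - e x)"
      using ab(1) unfolding S1_def by blast
    obtain l' f' where D2: "(l', f') \<in> D" and b: "b = U (\<lambda>x. f' x + e x) - l'"
      using ab(2) unfolding S2_def by blast
    have "l + l' \<le> U (\<lambda>x. (f x - e x) + (f' x + e x))" using D_le[OF D_add[OF D1 D2]] by simp
    also have "\<dots> \<le> U (\<lambda>x. f x - e x) + U (\<lambda>x. f' x + e x)" by (rule U_add)
    finally show ?thesis using a b by simp
  qed
  have "S1 \<noteq> {}" "S2 \<noteq> {}" using D_ne unfolding S1_def S2_def by auto
  then have bdd: "bdd_above S1" using sep by (meson bdd_above_def equals0I)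
  show ?thesis
  proof
    show "l - U (\<lambda>x. f x - e x) \<le> Sup S1" if "(l, f) \<in> D" for l f
      using that by (intro cSup_upper[OF _ bdd]) (force simp: S1_def)
    show "Sup S1 \<le> U (\<lambda>x. f x + e x) - l" if "(l, f) \<in> D" for l f
      using \<open>S1 \<noteq> {}\<close> that sep by (intro cSup_least) (force simp: S2_def)+
  qed
qed

lemma sublinear_extension_step: "\<exists>c. \<forall>(l, f) \<in> D. \<forall>s. l + s * c \<le> U (\<lambda>x. f x + s * e x)"
proof -
  obtain c where c_ge: "\<And>l f. (l, f) \<in> D \<Longrightarrow> l - U (\<lambda>x. f x - e x) \<le> c"
    and c_le: "\<And>l f. (l, f) \<in> D \<Longrightarrow> c \<le> U (\<lambda>x. f x + e x) - l"
    using sublinear_separating_value by blast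
  have "l + s * c \<le> U (\<lambda>x. f x + s * e x)" if lf: "(l, f) \<in> D" for l f s
  proof -
    consider "s = 0" | "s > 0" | "s < 0" by linarith
    then show ?thesis
    proof cases
      case 1
      then show ?thesis using D_le[OF lf] by simp
    next
      case 2
      have "c \<le> U (\<lambda>x. f x / s + e x) - l / s"
        using c_le[OF D_scale[OF lf, of "1 / s"]] by simp
      then have "l + s * c \<le> s * U (\<lambda>x. f x / s + e x)" using 2 by (simp add: field_simps)
      also have "s * U (\<lambda>x. f x / s + e x) = U (\<lambda>x. s * (f x / s + e x))"
        using U_scale[of s "\<lambda>x. f x / s + e x"] 2 by simp
      also have "(\<lambda>x. s * (f x / s + e x)) = (\<lambda>x. f x + s * e x)"
        using 2 by (simp add: fun_eq_iff algebra_simps)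
      finally show ?thesis by simp
    next
      case 3
      have "- l / s - U (\<lambda>x. - f x / s - e x) \<le> c"
        using c_ge[OF D_scale[OF lf, of "- 1 / s"]] by simp
      then have "l + s * c \<le> - s * U (\<lambda>x. - f x / s - e x)" using 3 by (simp add: field_simps)
      also have "- s * U (\<lambda>x. - f x / s - e x) = U (\<lambda>x. - s * (- f x / s - e x))"
        using U_scale[of "- s" "\<lambda>x. - f x / s - e x"] 3 by simp
      also have "(\<lambda>x. - s * (- f x / s - e x)) = (\<lambda>x. f x + s * e x)"
        using 3 by (simp add: fun_eq_iff algebra_simps)
      finally show ?thesis by simp
    qed
  qed
  then show ?thesis by blast
qed

end

text \<open>The graph of the linear functional on \<open>span {f0, I_b : b \<in> G}\<close> with value \<open>v\<close> at \<open>f0\<close>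
  and \<open>q b\<close> at \<open>I_b\<close> (as a parametrised family; the parametrisation need not be injective).\<close>

definition lin_graph :: "('a \<Rightarrow> real) \<Rightarrow> real \<Rightarrow> ('a \<Rightarrow> real) \<Rightarrow> 'a set \<Rightarrow> (real \<times> ('a \<Rightarrow> real)) set" where
  "lin_graph f0 v q G = {(t * v + (\<Sum>b\<in>G. r b * q b), \<lambda>x. t * f0 x + (\<Sum>b\<in>G. r b * indicator {b} x)) | t r. True}"

lemma lin_graph_add:
  assumes "(l, f) \<in> lin_graph f0 v q G" "(l', f') \<in> lin_graph f0 v q G"
  shows "(l + l', \<lambda>x. f x + f' x) \<in> lin_graph f0 v q G"
proof -
  obtain t r where "l = t * v + (\<Sum>b\<in>G. r b * q b)" "f = (\<lambda>x. t * f0 x + (\<Sum>b\<in>G. r b * indicator {b} x))"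
    using assms(1) unfolding lin_graph_def by blast
  moreover obtain t' r' where "l' = t' * v + (\<Sum>b\<in>G. r' b * q b)"
    "f' = (\<lambda>x. t' * f0 x + (\<Sum>b\<in>G. r' b * indicator {b} x))"
    using assms(2) unfolding lin_graph_def by blast
  ultimately show ?thesis unfolding lin_graph_def
    by (auto intro!: exI[of _ "t + t'"] exI[of _ "\<lambda>b. r b + r' b"] simp: algebra_simps sum.distrib fun_eq_iff)
qed

lemma lin_graph_scale:
  assumes "(l, f) \<in> lin_graph f0 v q G"
  shows "(c * l, \<lambda>x. c * f x) \<in> lin_graph f0 v q G"
proof -
  obtain t r where "l = t * v + (\<Sum>b\<in>G. r b * q b)" "f = (\<lambda>x. t * f0 x + (\<Sum>b\<in>G. r b * indicator {b} x))"
    using assms unfolding lin_graph_def by blast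
  then show ?thesis unfolding lin_graph_def
    by (auto intro!: exI[of _ "c * t"] exI[of _ "\<lambda>b. c * r b"] simp: algebra_simps sum_distrib_left fun_eq_iff)
qed

lemma dominated_extension:
  assumes coh: "coherent_lp A P" and fin: "finite G"
  shows "\<exists>q. \<forall>t r. t * P f0 + (\<Sum>a\<in>G. r a * q a)
            \<le> upper P (\<lambda>x. t * f0 x + (\<Sum>a\<in>G. r a * indicator {a} x))"
  using fin
proof (induction G rule: finite_induct)
  case empty
  have "t * P f0 \<le> upper P (\<lambda>x. t * f0 x)" for t
  proof (cases "t \<ge> 0")
    case True
    then show ?thesis using upper_scale_nonneg[OF coh True, of f0] coherent_lp_le_upper[OF coh, of f0]
      by (simp add: mult_left_mono)
  next
    case False
    then show ?thesis using coherent_lp_scale_nonneg[OF coh, of "- t" f0] unfolding upper_def by simp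
  qed
  then show ?case by simp
next
  case (insert a G)
  from insert.IH obtain q where q: "\<And>t r. t * P f0 + (\<Sum>a\<in>G. r a * q a)
            \<le> upper P (\<lambda>x. t * f0 x + (\<Sum>a\<in>G. r a * indicator {a} x))" by blast
  have "\<exists>c. \<forall>(l, f) \<in> lin_graph f0 (P f0) q G. \<forall>s. l + s * c \<le> upper P (\<lambda>x. f x + s * indicator {a} x)"
    by (rule sublinear_extension_step[OF upper_add_le[OF coh] upper_scale_nonneg[OF coh] lin_graph_add lin_graph_scale])
      (use q in \<open>auto simp: lin_graph_def\<close>)
  then obtain c where c: "\<And>t r s. t * P f0 + (\<Sum>b\<in>G. r b * q b) + s * c
      \<le> upper P (\<lambda>x. t * f0 x + (\<Sum>b\<in>G. r b * indicator {b} x) + s * indicator {a} x)"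
    unfolding lin_graph_def by fast
  have sum_upd: "(\<Sum>b\<in>insert a G. r b * (q(a := c)) b) = r a * c + (\<Sum>b\<in>G. r b * q b)" for r
    using insert.hyps by (auto intro!: sum.cong)
  show ?case
  proof (intro exI allI)
    fix t r
    show "t * P f0 + (\<Sum>b\<in>insert a G. r b * (q(a := c)) b)
       \<le> upper P (\<lambda>x. t * f0 x + (\<Sum>b\<in>insert a G. r b * indicator {b} x))"
      using c[of t r "r a"] sum_upd[of r] insert.hyps by (simp add: algebra_simps)
  qed
qed

lemma dominating_lin_prev_exists:
  assumes coh: "coherent_lp A P" and fin: "finite A" and ne: "A \<noteq> {}"
  shows "\<exists>p. dominates A P p \<and> lin_prev A p f0 = P f0"
proof -
  obtain q where q: "\<And>t r. t * P f0 + (\<Sum>a\<in>A. r a * q a)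
            \<le> upper P (\<lambda>x. t * f0 x + (\<Sum>a\<in>A. r a * indicator {a} x))"
    using dominated_extension[OF coh fin, of f0] by blast
  have U: "upper P (\<lambda>x. t * f0 x + (\<Sum>a\<in>A. r a * indicator {a} x)) = upper P g"
    if "\<And>x. x \<in> A \<Longrightarrow> t * f0 x + r x = g x" for t r g
    by (rule upper_cong[OF coh ne]) (use that fin in \<open>simp add: sum_indicator_singleton\<close>)
  have dom: "dominates A P q" unfolding dominates_def
  proof
    fix f
    have "0 * P f0 + (\<Sum>a\<in>A. (- f a) * q a) \<le> upper P (\<lambda>x. - f x)"
      using q[of 0 "\<lambda>a. - f a"] U[of 0 "\<lambda>a. - f a" "\<lambda>x. - f x"] by simp
    then show "P f \<le> lin_prev A q f" unfolding upper_def lin_prev_def by (simp add: sum_negf mult.commute)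
  qed
  have "1 * P f0 + (\<Sum>a\<in>A. (- f0 a) * q a) \<le> upper P (\<lambda>x. 0)"
    using q[of 1 "\<lambda>a. - f0 a"] U[of 1 "\<lambda>a. - f0 a" "\<lambda>x. 0"] by simp
  moreover have "(-1) * P f0 + (\<Sum>a\<in>A. f0 a * q a) \<le> upper P (\<lambda>x. 0)"
    using q[of "-1" f0] U[of "-1" f0 "\<lambda>x. 0"] by simp
  moreover have "upper P (\<lambda>x. 0) = 0" using coherent_lp_zero[OF coh] unfolding upper_def by simp
  ultimately have "lin_prev A q f0 = P f0" unfolding lin_prev_def by (simp add: sum_negf mult.commute)
  with dom show ?thesis by blast
qed

lemma dominates_nonneg:
  assumes "dominates A P p" "coherent_lp A P" "A \<noteq> {}" "finite A" "a \<in> A"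
  shows "0 \<le> p a"
  using assms(1) coherent_lp_nonneg[OF assms(2,3), of "indicator {a}"]
    lin_prev_indicator[OF assms(4,5)] unfolding dominates_def by (metis indicator_pos_le order_trans)

lemma dominates_sum_eq_1:
  assumes "dominates A P p" "coherent_lp A P" "A \<noteq> {}"
  shows "(\<Sum>a\<in>A. p a) = 1"
proof -
  have "P (\<lambda>x. 1) \<le> lin_prev A p (\<lambda>x. 1)" "P (\<lambda>x. -1) \<le> lin_prev A p (\<lambda>x. -1)"
    using assms(1) unfolding dominates_def by blast+
  then show ?thesis using coherent_lp_const[OF assms(2,3), of 1] coherent_lp_const[OF assms(2,3), of "-1"]
    unfolding lin_prev_def by (simp add: sum_negf)
qed

section \<open>Walley coherence\<close>

lemma walley_coherentD:
  assumes "walley_coherent L" "ja < length L" "Ba \<in> fst (L ! ja)"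
  shows "\<exists>w \<in> Ba \<union> (\<Union>j<length L. \<Union>{B \<in> fst (L ! j). \<exists>v\<in>B. fs j v \<noteq> 0}).
          (\<Sum>j<length L. \<Sum>B\<in>fst (L ! j). gain (snd (L ! j)) B (fs j) w)
            - gain (snd (L ! ja)) Ba fa w \<ge> 0"
  using assms unfolding walley_coherent_def by blast

lemma sum_weighted_le_neg_mass:
  fixes H :: "'w \<Rightarrow> real"
  assumes fin: "finite \<Omega>" and B0: "B0 \<subseteq> \<Omega>"
    and neg: "\<And>w. w \<in> \<Omega> \<Longrightarrow> H w \<le> 0" "\<And>w. w \<in> B0 \<Longrightarrow> H w < 0"
  obtains \<eta> where "\<eta> > 0" "\<And>m. (\<And>w. 0 \<le> m w) \<Longrightarrow> (\<Sum>w\<in>\<Omega>. m w * H w) \<le> - \<eta> * (\<Sum>w\<in>B0. m w)"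
proof (cases "B0 = {}")
  case True
  show ?thesis by (rule that[of 1]) (use True neg(1) in \<open>auto intro: sum_nonpos mult_nonneg_nonpos\<close>)
next
  case False
  have finB0: "finite B0" using B0 fin finite_subset by blast
  define \<eta> where "\<eta> = Min ((\<lambda>w. - H w) ` B0)"
  have "\<eta> > 0" unfolding \<eta>_def using finB0 False neg(2) by (subst Min_gr_iff) auto
  moreover have eta_le: "H w \<le> - \<eta>" if "w \<in> B0" for w
    unfolding \<eta>_def using finB0 that by (smt (verit) Min_le finite_imageI image_eqI)
  have "(\<Sum>w\<in>\<Omega>. m w * H w) \<le> - \<eta> * (\<Sum>w\<in>B0. m w)" if m: "\<And>w. 0 \<le> m w" for m
  proof -
    have "(\<Sum>w\<in>\<Omega>. m w * H w) = (\<Sum>w\<in>B0. m w * H w) + (\<Sum>w\<in>\<Omega> - B0. m w * H w)"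
      using fin B0 by (metis (no_types, lifting) sum.subset_diff add.commute)
    also have "(\<Sum>w\<in>\<Omega> - B0. m w * H w) \<le> 0"
      using neg(1) m by (intro sum_nonpos) (simp add: mult_nonneg_nonpos)
    also have "(\<Sum>w\<in>B0. m w * H w) \<le> (\<Sum>w\<in>B0. m w * (- \<eta>))"
      using eta_le m by (intro sum_mono mult_left_mono) auto
    finally show ?thesis by (simp add: sum_negf sum_distrib_left[symmetric] mult.commute)
  qed
  ultimately show ?thesis using that by blast
qed

text \<open>The dual certificate of Walley coherence: a combination of gains that were negative on the
  relevant support would have negative expectation under such weights.\<close>

definition certifying_weights ::
  "('w set set \<times> ('w set \<Rightarrow> ('w \<Rightarrow> real) \<Rightarrow> real)) list \<Rightarrow> 'w set \<Rightarrow>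
     ('w set \<Rightarrow> ('w \<Rightarrow> real) \<Rightarrow> real) \<Rightarrow> 'w set \<Rightarrow> ('w \<Rightarrow> real) \<Rightarrow> real \<Rightarrow> ('w \<Rightarrow> real) \<Rightarrow> bool" where
  "certifying_weights L \<Omega> P0 B0 f0 \<delta> m \<longleftrightarrow>
     (\<forall>w. 0 \<le> m w) \<and>
     (\<forall>j<length L. \<forall>B\<in>fst (L ! j). \<forall>f. 0 \<le> (\<Sum>w\<in>\<Omega>. m w * gain (snd (L ! j)) B f w)) \<and>
     (\<Sum>w\<in>\<Omega>. m w * gain P0 B0 f0 w) \<le> \<delta> * (\<Sum>w\<in>B0. m w) \<and>
     0 < (\<Sum>w\<in>B0. m w)"

lemma sum_gains_off_support:
  assumes zero: "\<And>j B f. j < length L \<Longrightarrow> B \<in> fst (L ! j) \<Longrightarrow> (\<forall>v\<in>B. f v = 0) \<Longrightarrow> snd (L ! j) B f = 0"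
    and w: "w \<notin> (\<Union>j<length L. \<Union>{B \<in> fst (L ! j). \<exists>v\<in>B. fs j v \<noteq> 0})"
  shows "(\<Sum>j<length L. \<Sum>B\<in>fst (L ! j). gain (snd (L ! j)) B (fs j) w) = 0"
proof -
  have "gain (snd (L ! j)) B (fs j) w = 0" if "j < length L" "B \<in> fst (L ! j)" for j B
  proof (cases "w \<in> B")
    case True
    then have "\<forall>v\<in>B. fs j v = 0" using w that by blast
    then show ?thesis using zero[OF that] True unfolding gain_def by simp
  qed (simp add: gain_def)
  then show ?thesis by simp
qed

lemma certifying_weights_sum_ge:
  assumes "certifying_weights L \<Omega> P0 B0 f0 \<delta> m"
  shows "(\<Sum>w\<in>\<Omega>. m w * ((\<Sum>j<length L. \<Sum>B\<in>fst (L ! j). gain (snd (L ! j)) B (fs j) w) - gain P0 B0 f0 w))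
           \<ge> - \<delta> * (\<Sum>w\<in>B0. m w)"
proof -
  have m1: "\<And>j B f. j<length L \<Longrightarrow> B\<in>fst (L ! j) \<Longrightarrow> 0 \<le> (\<Sum>w\<in>\<Omega>. m w * gain (snd (L ! j)) B f w)"
    and m2: "(\<Sum>w\<in>\<Omega>. m w * gain P0 B0 f0 w) \<le> \<delta> * (\<Sum>w\<in>B0. m w)"
    using assms unfolding certifying_weights_def by auto
  have "(\<Sum>w\<in>\<Omega>. m w * ((\<Sum>j<length L. \<Sum>B\<in>fst (L ! j). gain (snd (L ! j)) B (fs j) w) - gain P0 B0 f0 w))
      = (\<Sum>j<length L. \<Sum>B\<in>fst (L ! j). \<Sum>w\<in>\<Omega>. m w * gain (snd (L ! j)) B (fs j) w)
          - (\<Sum>w\<in>\<Omega>. m w * gain P0 B0 f0 w)"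
    by (simp add: right_diff_distrib sum_subtractf sum_distrib_left sum.swap[of _ \<Omega>])
  also have "\<dots> \<ge> 0 - \<delta> * (\<Sum>w\<in>B0. m w)"
  proof (rule diff_mono[OF _ m2])
    show "0 \<le> (\<Sum>j<length L. \<Sum>B\<in>fst (L ! j). \<Sum>w\<in>\<Omega>. m w * gain (snd (L ! j)) B (fs j) w)"
      by (rule sum_nonneg, rule sum_nonneg) (use m1 in auto)
  qed
  finally show ?thesis by simp
qed

lemma walley_coherentI:
  fixes L :: "('w set set \<times> ('w set \<Rightarrow> ('w \<Rightarrow> real) \<Rightarrow> real)) list" and \<Omega> :: "'w set"
  assumes fin\<Omega>: "finite \<Omega>"
    and cellsub: "\<And>j B. j < length L \<Longrightarrow> B \<in> fst (L ! j) \<Longrightarrow> B \<subseteq> \<Omega>"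
    and zero: "\<And>j B f. j < length L \<Longrightarrow> B \<in> fst (L ! j) \<Longrightarrow> (\<forall>v\<in>B. f v = 0) \<Longrightarrow> snd (L ! j) B f = 0"
    and weights: "\<And>j0 B0 f0 \<delta>. j0 < length L \<Longrightarrow> B0 \<in> fst (L ! j0) \<Longrightarrow> \<delta> > 0 \<Longrightarrow>
       \<exists>m. certifying_weights L \<Omega> (snd (L ! j0)) B0 f0 \<delta> m"
  shows "walley_coherent L"
  unfolding walley_coherent_def
proof (intro allI impI)
  fix fs :: "nat \<Rightarrow> 'w \<Rightarrow> real" and j0 f0 B0
  assume j0: "j0 < length L" and B0: "B0 \<in> fst (L ! j0)"
  define U where "U = (\<Union>j<length L. \<Union>{B \<in> fst (L ! j). \<exists>v\<in>B. fs j v \<noteq> 0})"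
  define H where "H w = (\<Sum>j<length L. \<Sum>B\<in>fst (L ! j). gain (snd (L ! j)) B (fs j) w)
            - gain (snd (L ! j0)) B0 f0 w" for w
  have "\<exists>w\<in>B0 \<union> U. H w \<ge> 0"
  proof (rule ccontr)
    assume "\<not> ?thesis"
    then have neg: "\<And>w. w \<in> B0 \<union> U \<Longrightarrow> H w < 0" by force
    have "H w = 0" if "w \<notin> B0 \<union> U" for w
      using that sum_gains_off_support[OF zero, of w fs] unfolding H_def U_def gain_def by simp
    then have "H w \<le> 0" if "w \<in> \<Omega>" for w using neg[of w] by (cases "w \<in> B0 \<union> U") auto
    then obtain \<eta> where \<eta>: "\<eta> > 0"
      and le: "\<And>m. (\<And>w. 0 \<le> m w) \<Longrightarrow> (\<Sum>w\<in>\<Omega>. m w * H w) \<le> - \<eta> * (\<Sum>w\<in>B0. m w)"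
      using sum_weighted_le_neg_mass[OF fin\<Omega> cellsub[OF j0 B0], of H] neg by blast
    obtain m where m: "certifying_weights L \<Omega> (snd (L ! j0)) B0 f0 (\<eta>/2) m"
      using weights[OF j0 B0, of "\<eta>/2" f0] \<eta> by auto
    then have "(\<Sum>w\<in>\<Omega>. m w * H w) \<ge> - (\<eta>/2) * (\<Sum>w\<in>B0. m w)"
      unfolding H_def by (rule certifying_weights_sum_ge)
    moreover have "\<And>w. 0 \<le> m w" and pos: "0 < (\<Sum>w\<in>B0. m w)" using m unfolding certifying_weights_def by auto
    ultimately have "- (\<eta> / 2) * (\<Sum>w\<in>B0. m w) \<le> - \<eta> * (\<Sum>w\<in>B0. m w)" using le[of m] by fastforce
    then show False using mult_pos_pos[OF \<eta> pos] by simp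
  qed
  then show "\<exists>w\<in>B0 \<union> (\<Union>j<length L. \<Union>{B \<in> fst (L ! j). \<exists>v\<in>B. fs j v \<noteq> 0}).
    (\<Sum>j<length L. \<Sum>B\<in>fst (L ! j). gain (snd (L ! j)) B (fs j) w) - gain (snd (L ! j0)) B0 f0 w \<ge> 0"
    unfolding U_def H_def .
qed

lemma cells_memE:
  assumes "B \<in> cells \<Omega> key"
  obtains w0 where "w0 \<in> \<Omega>" "B = {v \<in> \<Omega>. key v = key w0}"
  using assms unfolding cells_def by blast

lemma cells_key_eq: "B \<in> cells \<Omega> key \<Longrightarrow> v \<in> B \<Longrightarrow> w \<in> B \<Longrightarrow> w \<in> \<Omega> \<and> key w = key v"
  unfolding cells_def by auto

lemma sum_cells_gain:
  assumes fin: "finite \<Omega>" and w: "w \<in> \<Omega>"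
  shows "(\<Sum>B\<in>cells \<Omega> key. gain P B f w) = f w - P {v \<in> \<Omega>. key v = key w} f"
proof -
  let ?C = "{v \<in> \<Omega>. key v = key w}"
  have C: "?C \<in> cells \<Omega> key" using w unfolding cells_def by blast
  have fc: "finite (cells \<Omega> key)" using fin unfolding cells_def by simp
  have "(\<Sum>B\<in>cells \<Omega> key. gain P B f w) = gain P ?C f w + (\<Sum>B\<in>cells \<Omega> key - {?C}. gain P B f w)"
    using sum.remove[OF fc C] .
  also have "(\<Sum>B\<in>cells \<Omega> key - {?C}. gain P B f w) = 0"
  proof (rule sum.neutral, rule ballI)
    fix B assume B: "B \<in> cells \<Omega> key - {?C}"
    then obtain w0 where "w0 \<in> \<Omega>" "B = {v \<in> \<Omega>. key v = key w0}" by (auto elim: cells_memE)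
    then have "w \<notin> B" using B by auto
    then show "gain P B f w = 0" unfolding gain_def by simp
  qed
  finally show ?thesis using w unfolding gain_def by simp
qed

section \<open>The model and its possibility spaces\<close>

lemma indexed_list_Cons_iff:
  "(length (x # xs) = Suc m \<and> (\<forall>i<length (x # xs). (x # xs) ! i \<in> S (k + i))) \<longleftrightarrow>
   x \<in> S k \<and> length xs = m \<and> (\<forall>i<length xs. xs ! i \<in> S (Suc k + i))"
  by (auto simp: less_Suc_eq_0_disj)

lemma finite_indexed_lists:
  assumes "\<And>i. i < m \<Longrightarrow> finite (S i)"
  shows "finite {xs. length xs = m \<and> (\<forall>i<length xs. xs ! i \<in> S i)}"
proof (rule finite_subset)
  show "{xs. length xs = m \<and> (\<forall>i<length xs. xs ! i \<in> S i)} \<subseteq> {xs. set xs \<subseteq> (\<Union>i<m. S i) \<and> length xs = m}"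
    by (fastforce simp: in_set_conv_nth)
  show "finite {xs. set xs \<subseteq> (\<Union>i<m. S i) \<and> length xs = m}"
    using assms by (intro finite_lists_length_eq) auto
qed

locale positive_ihmm =
  fixes M :: "('x, 'o) ihmm" and ob :: "nat \<Rightarrow> 'o"
  assumes n_pos: "len M \<ge> 1"
    and finX: "\<forall>i\<in>{1..len M}. finite (st M i) \<and> st M i \<noteq> {}"
    and finO: "\<forall>i\<in>{1..len M}. finite (out M i) \<and> out M i \<noteq> {}"
    and obs: "\<forall>i\<in>{1..len M}. ob i \<in> out M i"
    and cohQ: "\<forall>i\<in>{1..len M}. \<forall>y\<in>st M (i - 1). coherent_lp (st M i) (Qm M i y)"
    and cohS: "\<forall>i\<in>{1..len M}. \<forall>y\<in>st M i. coherent_lp (out M i) (Sm M i y)"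
    and posQ: "\<forall>i\<in>{1..len M}. \<forall>y\<in>st M (i - 1). \<forall>x\<in>st M i.
                 upper (Qm M i y) (indicator {x}) > 0"
    and posS: "\<forall>i\<in>{1..len M}. \<forall>y\<in>st M i. \<forall>u\<in>out M i.
                 upper (Sm M i y) (indicator {u}) > 0"
begin

abbreviation "n \<equiv> len M"

lemma finite_st: "1 \<le> i \<Longrightarrow> i \<le> n \<Longrightarrow> finite (st M i)" using finX by auto
lemma st_nonempty: "1 \<le> i \<Longrightarrow> i \<le> n \<Longrightarrow> st M i \<noteq> {}" using finX by auto
lemma finite_out: "1 \<le> i \<Longrightarrow> i \<le> n \<Longrightarrow> finite (out M i)" using finO by auto
lemma out_nonempty: "1 \<le> i \<Longrightarrow> i \<le> n \<Longrightarrow> out M i \<noteq> {}" using finO by auto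
lemma ob_in_out: "1 \<le> i \<Longrightarrow> i \<le> n \<Longrightarrow> ob i \<in> out M i" using obs by auto
lemma Q_coherent: "1 \<le> i \<Longrightarrow> i \<le> n \<Longrightarrow> y \<in> st M (i - 1) \<Longrightarrow> coherent_lp (st M i) (Qm M i y)"
  using cohQ by auto
lemma S_coherent: "1 \<le> i \<Longrightarrow> i \<le> n \<Longrightarrow> y \<in> st M i \<Longrightarrow> coherent_lp (out M i) (Sm M i y)"
  using cohS by auto
lemma Q_upper_pos: "1 \<le> i \<Longrightarrow> i \<le> n \<Longrightarrow> y \<in> st M (i - 1) \<Longrightarrow> x \<in> st M i \<Longrightarrow> upper (Qm M i y) (indicator {x}) > 0"
  using posQ by auto
lemma S_upper_pos: "1 \<le> i \<Longrightarrow> i \<le> n \<Longrightarrow> y \<in> st M i \<Longrightarrow> u \<in> out M i \<Longrightarrow> upper (Sm M i y) (indicator {u}) > 0"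
  using posS by auto

lemma xseq_Cons:
  assumes "j < n"
  shows "x # xs \<in> xseq M j \<longleftrightarrow> x \<in> st M j \<and> xs \<in> xseq M (Suc j)"
proof -
  have "Suc n - j = Suc (Suc n - Suc j)" using assms by simp
  then show ?thesis unfolding xseq_def mem_Collect_eq \<open>Suc n - j = _\<close> indexed_list_Cons_iff by simp
qed

lemma oseq_Cons:
  assumes "j < n"
  shows "u # os \<in> oseq M j \<longleftrightarrow> u \<in> out M j \<and> os \<in> oseq M (Suc j)"
proof -
  have "Suc n - j = Suc (Suc n - Suc j)" using assms by simp
  then show ?thesis unfolding oseq_def mem_Collect_eq \<open>Suc n - j = _\<close> indexed_list_Cons_iff by simp
qed

lemma length_xseq: "xs \<in> xseq M j \<Longrightarrow> length xs = Suc n - j" unfolding xseq_def by auto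
lemma length_oseq: "os \<in> oseq M j \<Longrightarrow> length os = Suc n - j" unfolding oseq_def by auto

lemma xseq_not_Nil: "xs \<in> xseq M j \<Longrightarrow> j \<le> n \<Longrightarrow> xs \<noteq> []" using length_xseq by fastforce
lemma oseq_not_Nil: "os \<in> oseq M j \<Longrightarrow> j \<le> n \<Longrightarrow> os \<noteq> []" using length_oseq by fastforce

lemma xseq_last: "xs \<in> xseq M n \<longleftrightarrow> (\<exists>x. xs = [x] \<and> x \<in> st M n)"
proof
  assume "xs \<in> xseq M n"
  then show "\<exists>x. xs = [x] \<and> x \<in> st M n" unfolding xseq_def
    by (cases xs) auto
qed (auto simp: xseq_def)

lemma oseq_last: "os \<in> oseq M n \<longleftrightarrow> (\<exists>u. os = [u] \<and> u \<in> out M n)"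
proof
  assume "os \<in> oseq M n"
  then show "\<exists>u. os = [u] \<and> u \<in> out M n" unfolding oseq_def
    by (cases os) auto
qed (auto simp: oseq_def)

lemma finite_xseq: "1 \<le> j \<Longrightarrow> finite (xseq M j)"
  unfolding xseq_def using finite_st by (intro finite_indexed_lists) auto

lemma finite_oseq: "1 \<le> j \<Longrightarrow> finite (oseq M j)"
  unfolding oseq_def using finite_out by (intro finite_indexed_lists) auto

lemma xseq_Cons_ex: "1 \<le> j \<Longrightarrow> j \<le> n \<Longrightarrow> x \<in> st M j \<Longrightarrow> \<exists>xs. x # xs \<in> xseq M j"
proof (induction "n - j" arbitrary: j x)
  case 0
  then have "j = n" by simp
  then show ?case using 0 xseq_last by auto
next
  case (Suc d)
  then have j: "j < n" by simp
  obtain y where y: "y \<in> st M (Suc j)" using st_nonempty[of "Suc j"] j by auto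
  have d: "d = n - Suc j" using Suc.hyps(2) by simp
  obtain ys where "y # ys \<in> xseq M (Suc j)" using Suc.hyps(1)[OF d _ _ y] j by auto
  then show ?case using xseq_Cons[OF j] Suc.prems by blast
qed

lemma oseq_ex: "1 \<le> j \<Longrightarrow> j \<le> n \<Longrightarrow> \<exists>os. os \<in> oseq M j"
proof (induction "n - j" arbitrary: j)
  case 0
  then have "j = n" by simp
  then show ?case using 0 oseq_last out_nonempty[of n] by auto
next
  case (Suc d)
  then have j: "j < n" by simp
  obtain u where u: "u \<in> out M j" using out_nonempty[of j] j Suc.prems by auto
  have d: "d = n - Suc j" using Suc.hyps(2) by simp
  obtain os where "os \<in> oseq M (Suc j)" using Suc.hyps(1)[OF d] j by auto
  then show ?case using oseq_Cons[OF j] u by blast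
qed

lemma finite_Omega: "1 \<le> j \<Longrightarrow> finite (Omega M j)"
  unfolding Omega_def using finite_xseq finite_oseq by auto

lemma Omega_iff_hd_tl:
  assumes "j < n"
  shows "w \<in> Omega M j \<longleftrightarrow> fst w \<noteq> [] \<and> snd w \<noteq> [] \<and> hd (fst w) \<in> st M j \<and> hd (snd w) \<in> out M j
          \<and> (tl (fst w), tl (snd w)) \<in> Omega M (Suc j)"
proof -
  obtain a b where w: "w = (a, b)" by force
  show ?thesis
  proof (cases a)
    case Nil
    then show ?thesis using w xseq_not_Nil[of "[]" j] assms unfolding Omega_def by auto
  next
    case (Cons x xs)
    show ?thesis
    proof (cases b)
      case Nil
      then show ?thesis using w oseq_not_Nil[of "[]" j] assms unfolding Omega_def by auto
    next
      case (Cons u os)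
      then show ?thesis using w \<open>a = x # xs\<close> xseq_Cons[OF assms] oseq_Cons[OF assms]
        unfolding Omega_def by auto
    qed
  qed
qed

lemma Omega_Cons:
  assumes "j < n"
  shows "(x # a, u # b) \<in> Omega M j \<longleftrightarrow> x \<in> st M j \<and> u \<in> out M j \<and> (a, b) \<in> Omega M (Suc j)"
  using Omega_iff_hd_tl[OF assms, of "(x # a, u # b)"] by simp

lemma Omega_last: "w \<in> Omega M n \<longleftrightarrow> (\<exists>x u. w = ([x], [u]) \<and> x \<in> st M n \<and> u \<in> out M n)"
  unfolding Omega_def using xseq_last oseq_last by auto

definition cell :: "nat \<Rightarrow> 'x \<Rightarrow> ('x list \<times> 'o list) set" where
  "cell j y = {w \<in> Omega M j. hd (fst w) = y}"

lemma cell_nonempty: "1 \<le> j \<Longrightarrow> j \<le> n \<Longrightarrow> y \<in> st M j \<Longrightarrow> cell j y \<noteq> {}"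
proof -
  assume a: "1 \<le> j" "j \<le> n" "y \<in> st M j"
  obtain xs where "y # xs \<in> xseq M j" using xseq_Cons_ex a by blast
  moreover obtain os where "os \<in> oseq M j" using oseq_ex a by blast
  ultimately show ?thesis unfolding cell_def Omega_def by force
qed

lemma finite_cell: "1 \<le> j \<Longrightarrow> finite (cell j y)"
  unfolding cell_def using finite_Omega by auto

lemma sum_cell_split:
  assumes j: "1 \<le> j" "j < n" and z: "z \<in> st M j"
  shows "(\<Sum>w\<in>Omega M j. if hd (fst w) = z then G w else 0)
       = (\<Sum>u\<in>out M j. \<Sum>v\<in>Omega M (Suc j). G (z # fst v, u # snd v))"
proof -
  let ?h = "\<lambda>(u, v). (z # fst v, u # snd v)"
  have eq: "{w \<in> Omega M j. hd (fst w) = z} = ?h ` (out M j \<times> Omega M (Suc j))"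
  proof
    show "{w \<in> Omega M j. hd (fst w) = z} \<subseteq> ?h ` (out M j \<times> Omega M (Suc j))"
    proof
      fix w assume "w \<in> {w \<in> Omega M j. hd (fst w) = z}"
      then have w: "w \<in> Omega M j" "hd (fst w) = z" by auto
      then have *: "fst w \<noteq> []" "snd w \<noteq> []" "hd (snd w) \<in> out M j" "(tl (fst w), tl (snd w)) \<in> Omega M (Suc j)"
        using Omega_iff_hd_tl[OF j(2)] by auto
      have "w = ?h (hd (snd w), (tl (fst w), tl (snd w)))" using * w(2) by (cases w) auto
      then show "w \<in> ?h ` (out M j \<times> Omega M (Suc j))" using * by blast
    qed
  next
    show "?h ` (out M j \<times> Omega M (Suc j)) \<subseteq> {w \<in> Omega M j. hd (fst w) = z}"
      using Omega_Cons[OF j(2)] z by auto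
  qed
  have inj: "inj_on ?h (out M j \<times> Omega M (Suc j))" by (auto simp: inj_on_def)
  have "(\<Sum>w\<in>Omega M j. if hd (fst w) = z then G w else 0) = (\<Sum>w\<in>{w \<in> Omega M j. hd (fst w) = z}. G w)"
    using finite_Omega[OF j(1)] by (simp add: sum.inter_filter)
  also have "\<dots> = (\<Sum>x\<in>out M j \<times> Omega M (Suc j). G (?h x))"
    unfolding eq by (rule sum.reindex[OF inj, unfolded comp_def])
  also have "\<dots> = (\<Sum>x\<in>out M j \<times> Omega M (Suc j). case x of (u, v) \<Rightarrow> G (z # fst v, u # snd v))"
    by (rule sum.cong) (auto split: prod.splits)
  also have "\<dots> = (\<Sum>u\<in>out M j. \<Sum>v\<in>Omega M (Suc j). G (z # fst v, u # snd v))"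
    by (simp add: sum.cartesian_product)
  finally show ?thesis .
qed

end

section \<open>Regularity of the joint models\<close>

declare Efun.simps[simp del]

lemma Efun_last: "Efun M (len M) y f = Sm M (len M) y (\<lambda>u. f ([y], [u]))"
  by (subst Efun.simps) simp

lemma Efun_step:
  assumes "j < len M"
  shows "Efun M j y f = Inf ((\<lambda>E. E y f) ` {E. ine_cand M j (Pk M (Suc j)) E})"
proof -
  have "(\<lambda>z' g. Qm M (Suc j) z' (\<lambda>y. Efun M (Suc j) y g)) = Pk M (Suc j)"
    by (intro ext) (simp add: Pk_def)
  moreover have "{E y f | E. ine_cand M j (Pk M (Suc j)) E} = (\<lambda>E. E y f) ` {E. ine_cand M j (Pk M (Suc j)) E}"
    by blast
  ultimately show ?thesis using assms by (subst Efun.simps) simp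
qed

context positive_ihmm
begin

text \<open>The second clause says that every atom of a cell has positive upper probability.\<close>

definition E_regular :: "nat \<Rightarrow> bool" where
  "E_regular j \<longleftrightarrow> (\<forall>y\<in>st M j. coherent_lp (cell j y) (Efun M j y)) \<and>
     (\<forall>y\<in>st M j. \<forall>v\<in>cell j y. Efun M j y (\<lambda>w. - indicator {v} w) < 0)"

lemma E_regular_last: "E_regular n"
  unfolding E_regular_def
proof (intro conjI ballI)
  fix y assume y: "y \<in> st M n"
  have n1: "1 \<le> n" using n_pos .
  have S: "coherent_lp (out M n) (Sm M n y)" using S_coherent[OF n1 le_refl y] .
  have cell: "cell n y = {([y], [u]) | u. u \<in> out M n}"
    unfolding cell_def using Omega_last y by auto
  show "coherent_lp (cell n y) (Efun M n y)"
    unfolding coherent_lp_def Efun_last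
  proof (intro conjI allI impI)
    fix f :: "'x list \<times> 'o list \<Rightarrow> real"
    show "(INF x\<in>cell n y. f x) \<le> Sm M n y (\<lambda>u. f ([y], [u]))"
      using finite_cell[OF n1, of y] by (intro coherent_lp_ge[OF S out_nonempty[OF n1 le_refl]]) (auto intro!: INF_le_finite simp: cell)
  next
    fix l :: real and f :: "'x list \<times> 'o list \<Rightarrow> real" assume "0 \<le> l"
    then show "Sm M n y (\<lambda>u. l * f ([y], [u])) = l * Sm M n y (\<lambda>u. f ([y], [u]))"
      using coherent_lpD(2)[OF S] by simp
  next
    fix f g :: "'x list \<times> 'o list \<Rightarrow> real"
    show "Sm M n y (\<lambda>u. f ([y], [u])) + Sm M n y (\<lambda>u. g ([y], [u])) \<le> Sm M n y (\<lambda>u. f ([y], [u]) + g ([y], [u]))"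
      using coherent_lpD(3)[OF S] by simp
  qed
  fix v assume "v \<in> cell n y"
  then obtain u0 where v: "v = ([y], [u0])" "u0 \<in> out M n" unfolding cell by auto
  have "(\<lambda>u. - indicator {v} ([y], [u])) = (\<lambda>u. (-1::real) * indicator {u0} u)"
    using v by (auto simp: indicator_def fun_eq_iff)
  then have "Efun M n y (\<lambda>w. - indicator {v} w) = (-1) * upper (Sm M n y) (indicator {u0})"
    unfolding Efun_last using coherent_lp_scale_nonpos[OF S, of "-1" "indicator {u0}"] by simp
  then show "Efun M n y (\<lambda>w. - indicator {v} w) < 0" using S_upper_pos[OF n1 le_refl y v(2)] by simp
qed

lemma Pk_coherent:
  assumes j: "1 \<le> j" "j \<le> n" and reg: "E_regular j" and y: "y \<in> st M (j - 1)"
  shows "coherent_lp (Omega M j) (Pk M j y)"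
proof -
  have Q: "coherent_lp (st M j) (Qm M j y)" using Q_coherent[OF j y] .
  have E: "coherent_lp (cell j y') (Efun M j y')" if "y' \<in> st M j" for y'
    using reg that unfolding E_regular_def by blast
  have cn: "cell j y' \<noteq> {}" if "y' \<in> st M j" for y' using cell_nonempty j that by blast
  show ?thesis unfolding coherent_lp_def Pk_def
  proof (intro conjI allI impI)
    fix f :: "'x list \<times> 'o list \<Rightarrow> real"
    show "(INF x\<in>Omega M j. f x) \<le> Qm M j y (\<lambda>y. Efun M j y f)"
    proof (rule coherent_lp_ge[OF Q st_nonempty[OF j]])
      fix y' assume y': "y' \<in> st M j"
      show "(INF x\<in>Omega M j. f x) \<le> Efun M j y' f"
        by (rule coherent_lp_ge[OF E[OF y'] cn[OF y']]) (auto intro!: INF_le_finite finite_Omega j simp: cell_def)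
    qed
  next
    fix l :: real and f :: "'x list \<times> 'o list \<Rightarrow> real" assume l: "0 \<le> l"
    have "Qm M j y (\<lambda>y. Efun M j y (\<lambda>x. l * f x)) = Qm M j y (\<lambda>y. l * Efun M j y f)"
      using coherent_lpD(2)[OF E l] by (intro coherent_lp_cong[OF Q st_nonempty[OF j]]) auto
    then show "Qm M j y (\<lambda>y. Efun M j y (\<lambda>x. l * f x)) = l * Qm M j y (\<lambda>y. Efun M j y f)"
      using coherent_lpD(2)[OF Q l] by simp
  next
    fix f g :: "'x list \<times> 'o list \<Rightarrow> real"
    have "Qm M j y (\<lambda>y. Efun M j y f + Efun M j y g) \<le> Qm M j y (\<lambda>y. Efun M j y (\<lambda>x. f x + g x))"
      using coherent_lpD(3)[OF E] by (intro coherent_lp_mono[OF Q st_nonempty[OF j]]) auto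
    then show "Qm M j y (\<lambda>y. Efun M j y f) + Qm M j y (\<lambda>y. Efun M j y g) \<le> Qm M j y (\<lambda>y. Efun M j y (\<lambda>x. f x + g x))"
      using coherent_lpD(3)[OF Q] by (meson order_trans)
  qed
qed

lemma Efun_zero_on_cell:
  assumes j: "1 \<le> j" "j \<le> n" and reg: "E_regular j" and y: "y \<in> st M j"
    and z: "\<And>w. w \<in> cell j y \<Longrightarrow> f w = 0"
  shows "Efun M j y f = 0"
proof -
  have E: "coherent_lp (cell j y) (Efun M j y)" using reg y unfolding E_regular_def by blast
  have "Efun M j y f = Efun M j y (\<lambda>w. 0)" by (rule coherent_lp_cong[OF E cell_nonempty[OF j y]]) (use z in auto)
  then show ?thesis using coherent_lp_zero[OF E] by simp
qed

lemma Pk_neg_indicator: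
  assumes j: "1 \<le> j" "j \<le> n" and reg: "E_regular j" and y: "y \<in> st M (j - 1)" and v: "v \<in> Omega M j"
  shows "Pk M j y (\<lambda>w. - indicator {v} w) < 0"
proof -
  have Q: "coherent_lp (st M j) (Qm M j y)" using Q_coherent[OF j y] .
  define x where "x = hd (fst v)"
  have vx: "v \<in> cell j x" using v unfolding cell_def x_def by simp
  have fv: "fst v \<in> xseq M j" using v unfolding Omega_def by auto
  then have "fst v \<noteq> []" using xseq_not_Nil j by blast
  then have x: "x \<in> st M j" using fv unfolding x_def xseq_def by (auto simp: hd_conv_nth)
  define e where "e = Efun M j x (\<lambda>w. - indicator {v} w)"
  have e: "e < 0" using reg x vx unfolding E_regular_def e_def by blast
  have "Efun M j y' (\<lambda>w. - indicator {v} w) = e * indicator {x} y'" if "y' \<in> st M j" for y'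
  proof (cases "y' = x")
    case False
    have "Efun M j y' (\<lambda>w. - indicator {v} w) = 0"
      by (rule Efun_zero_on_cell[OF j reg that]) (use vx False in \<open>auto simp: cell_def indicator_def\<close>)
    then show ?thesis using False by simp
  qed (simp add: e_def)
  then have "Pk M j y (\<lambda>w. - indicator {v} w) = Qm M j y (\<lambda>y'. e * indicator {x} y')"
    unfolding Pk_def by (intro coherent_lp_cong[OF Q st_nonempty[OF j]]) auto
  also have "\<dots> = e * upper (Qm M j y) (indicator {x})" using coherent_lp_scale_nonpos[OF Q, of e] e by simp
  finally show ?thesis using Q_upper_pos[OF j y x] e by (simp add: mult_neg_pos)
qed

end

section \<open>The three assessments behind a candidate\<close>

text \<open>The conditional lower previsions whose Walley coherence \<open>ine_cand\<close> requires:
  \<open>E(\<cdot>|X_k)\<close>, \<open>S_k(\<cdot>|X_k)\<close> read as a model given \<open>(X_{k:n}, O_{k+1:n})\<close>, and \<open>P_{k+1}(\<cdot>|X_k)\<close>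
  read as a model given \<open>(X_k, O_k)\<close>.  Each acts on a cell through an arbitrary representative.\<close>

definition E_assessment :: "('x,'o) ihmm \<Rightarrow> nat \<Rightarrow> ('x \<Rightarrow> ('x list \<times> 'o list \<Rightarrow> real) \<Rightarrow> real)
    \<Rightarrow> ('x list \<times> 'o list) set set \<times> (('x list \<times> 'o list) set \<Rightarrow> ('x list \<times> 'o list \<Rightarrow> real) \<Rightarrow> real)" where
  "E_assessment M k E = (cells (Omega M k) (\<lambda>w. hd (fst w)), \<lambda>B f. E (hd (fst (SOME w. w \<in> B))) f)"

definition S_assessment :: "('x,'o) ihmm \<Rightarrow> nat
    \<Rightarrow> ('x list \<times> 'o list) set set \<times> (('x list \<times> 'o list) set \<Rightarrow> ('x list \<times> 'o list \<Rightarrow> real) \<Rightarrow> real)" where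
  "S_assessment M k = (cells (Omega M k) (\<lambda>w. (hd (fst w), tl (fst w), tl (snd w))),
     \<lambda>B f. (let w = SOME w. w \<in> B in Sm M k (hd (fst w)) (\<lambda>u. f (fst w, u # tl (snd w)))))"

definition P_assessment :: "('x,'o) ihmm \<Rightarrow> nat \<Rightarrow> ('x \<Rightarrow> ('x list \<times> 'o list \<Rightarrow> real) \<Rightarrow> real)
    \<Rightarrow> ('x list \<times> 'o list) set set \<times> (('x list \<times> 'o list) set \<Rightarrow> ('x list \<times> 'o list \<Rightarrow> real) \<Rightarrow> real)" where
  "P_assessment M k P1 = (cells (Omega M k) (\<lambda>w. (hd (fst w), hd (snd w))),
     \<lambda>B f. (let w = SOME w. w \<in> B in P1 (hd (fst w)) (\<lambda>v. f (hd (fst w) # fst v, hd (snd w) # snd v))))"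

lemma ine_cand_iff:
  "ine_cand M k P1 E \<longleftrightarrow>
     (\<forall>z\<in>st M k. coherent_lp {w \<in> Omega M k. hd (fst w) = z} (E z)) \<and>
     (\<forall>z\<in>st M k. \<forall>h. E z (\<lambda>w. h (hd (snd w))) = Sm M k z h) \<and>
     (\<forall>z\<in>st M k. \<forall>h. E z (\<lambda>w. h (tl (fst w), tl (snd w))) = P1 z h) \<and>
     walley_coherent [E_assessment M k E, S_assessment M k, P_assessment M k P1]"
  unfolding ine_cand_def E_assessment_def S_assessment_def P_assessment_def ..

definition atom_prev :: "(('o \<Rightarrow> real) \<Rightarrow> real) \<Rightarrow> 'o \<Rightarrow> real \<Rightarrow> real" where
  "atom_prev S o' c = (if 0 \<le> c then c * S (indicator {o'}) else c * upper S (indicator {o'}))"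

lemma coherent_lp_scaled_indicator:
  assumes "coherent_lp A S"
  shows "S (\<lambda>u. c * indicator {o'} u) = atom_prev S o' c"
  unfolding atom_prev_def using coherent_lp_scale_nonneg[OF assms, of c] coherent_lp_scale_nonpos[OF assms, of c]
  by auto

context positive_ihmm
begin

lemma witness_in_cell:
  assumes w: "w \<in> cell j y \<union> (\<Union>i<length [E_assessment M j E, S_assessment M j, P_assessment M j P1].
      \<Union>{B \<in> fst ([E_assessment M j E, S_assessment M j, P_assessment M j P1] ! i). \<exists>v\<in>B. fs i v \<noteq> 0})"
    and fs: "\<And>i v. fs i v \<noteq> 0 \<Longrightarrow> 0 < i \<and> hd (fst v) = y"
  shows "w \<in> cell j y"
proof (rule ccontr)
  assume "w \<notin> cell j y"
  then obtain i B v where "i < length [E_assessment M j E, S_assessment M j, P_assessment M j P1]"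
    "B \<in> fst ([E_assessment M j E, S_assessment M j, P_assessment M j P1] ! i)"
    "v \<in> B" "fs i v \<noteq> 0" "w \<in> B"
    using w by auto
  moreover from this have "i = 1 \<or> i = 2" "hd (fst v) = y" using fs[of i v] by (auto simp: less_Suc_eq)
  ultimately show False using \<open>w \<notin> cell j y\<close> unfolding S_assessment_def P_assessment_def cell_def
    by (auto dest!: cells_key_eq)
qed

lemma sum_gains_E_assessment:
  assumes "1 \<le> k" "w \<in> Omega M k"
  shows "(\<Sum>B\<in>fst (E_assessment M k E). gain (snd (E_assessment M k E)) B f w) = f w - E (hd (fst w)) f"
proof -
  let ?C = "{v \<in> Omega M k. hd (fst v) = hd (fst w)}"
  have "hd (fst (SOME v. v \<in> ?C)) = hd (fst w)" using someI[of "\<lambda>v. v \<in> ?C" w] assms(2) by auto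
  then show ?thesis unfolding E_assessment_def
    using sum_cells_gain[OF finite_Omega[OF assms(1)] assms(2), where key = "\<lambda>w. hd (fst w)"
        and P = "\<lambda>B f. E (hd (fst (SOME w. w \<in> B))) f"] by simp
qed

lemma sum_gains_S_assessment:
  assumes "1 \<le> k" "k < n" "w \<in> Omega M k"
  shows "(\<Sum>B\<in>fst (S_assessment M k). gain (snd (S_assessment M k)) B f w)
           = f w - Sm M k (hd (fst w)) (\<lambda>u. f (fst w, u # tl (snd w)))"
proof -
  let ?C = "{v \<in> Omega M k. (hd (fst v), tl (fst v), tl (snd v)) = (hd (fst w), tl (fst w), tl (snd w))}"
  define r where "r = (SOME v. v \<in> ?C)"
  have r: "r \<in> ?C" using someI[of "\<lambda>v. v \<in> ?C" w] assms(3) unfolding r_def by auto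
  have "fst r \<noteq> []" "fst w \<noteq> []" using r assms(3) Omega_iff_hd_tl[OF assms(2)] by auto
  then have "fst r = fst w" using r by (metis (mono_tags, lifting) list.expand mem_Collect_eq prod.inject)
  moreover have "tl (snd r) = tl (snd w)" using r by auto
  ultimately show ?thesis unfolding S_assessment_def
    using sum_cells_gain[OF finite_Omega[OF assms(1)] assms(3), where key = "\<lambda>w. (hd (fst w), tl (fst w), tl (snd w))"
        and P = "\<lambda>B f. (let w = SOME w. w \<in> B in Sm M k (hd (fst w)) (\<lambda>u. f (fst w, u # tl (snd w))))"]
    by (simp add: Let_def r_def)
qed

lemma sum_gains_P_assessment:
  assumes "1 \<le> k" "w \<in> Omega M k"
  shows "(\<Sum>B\<in>fst (P_assessment M k P1). gain (snd (P_assessment M k P1)) B f w)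
           = f w - P1 (hd (fst w)) (\<lambda>v. f (hd (fst w) # fst v, hd (snd w) # snd v))"
proof -
  let ?C = "{v \<in> Omega M k. (hd (fst v), hd (snd v)) = (hd (fst w), hd (snd w))}"
  have "hd (fst (SOME v. v \<in> ?C)) = hd (fst w) \<and> hd (snd (SOME v. v \<in> ?C)) = hd (snd w)"
    using someI[of "\<lambda>v. v \<in> ?C" w] assms(2) by auto
  then show ?thesis unfolding P_assessment_def
    using sum_cells_gain[OF finite_Omega[OF assms(1)] assms(2), where key = "\<lambda>w. (hd (fst w), hd (snd w))"
        and P = "\<lambda>B f. (let w = SOME w. w \<in> B in P1 (hd (fst w)) (\<lambda>v. f (hd (fst w) # fst v, hd (snd w) # snd v)))"]
    by (simp add: Let_def)
qed

end

section \<open>The product envelope\<close>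

locale ihmm_level = positive_ihmm M ob for M :: "('x, 'o) ihmm" and ob :: "nat \<Rightarrow> 'o" +
  fixes j assumes level: "1 \<le> j" "j < len M" and regular_next: "E_regular (Suc j)"
begin

lemma next_level: "1 \<le> Suc j" "Suc j \<le> n" using level by auto

text \<open>The lower envelope of the products \<open>s \<otimes> p\<close> of dominating mass functions of \<open>S_j(\<cdot>|y)\<close> and
  \<open>P_{j+1}(\<cdot>|y)\<close> is a candidate for \<open>E_j(\<cdot>|y)\<close>, hence an upper bound for the natural extension.\<close>

definition prod_prev :: "'x \<Rightarrow> ('o \<Rightarrow> real) \<Rightarrow> ('x list \<times> 'o list \<Rightarrow> real) \<Rightarrow> ('x list \<times> 'o list \<Rightarrow> real) \<Rightarrow> real" where
  "prod_prev y s p f = (\<Sum>u\<in>out M j. \<Sum>v\<in>Omega M (Suc j). s u * p v * f (y # fst v, u # snd v))"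

definition dom_S :: "'x \<Rightarrow> ('o \<Rightarrow> real) set" where
  "dom_S y = {s. dominates (out M j) (Sm M j y) s}"

definition dom_P :: "'x \<Rightarrow> ('x list \<times> 'o list \<Rightarrow> real) set" where
  "dom_P y = {p. dominates (Omega M (Suc j)) (Pk M (Suc j) y) p}"

definition prod_prevs :: "'x \<Rightarrow> (('x list \<times> 'o list \<Rightarrow> real) \<Rightarrow> real) set" where
  "prod_prevs y = {prod_prev y s p | s p. s \<in> dom_S y \<and> p \<in> dom_P y}"

definition prod_env :: "'x \<Rightarrow> ('x list \<times> 'o list \<Rightarrow> real) \<Rightarrow> real" where
  "prod_env y f = Inf ((\<lambda>\<phi>. \<phi> f) ` prod_prevs y)"

lemma P_next_coherent: "y \<in> st M j \<Longrightarrow> coherent_lp (Omega M (Suc j)) (Pk M (Suc j) y)"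
  using Pk_coherent[OF next_level regular_next, of y] by simp

lemma P_next_neg_indicator: "y \<in> st M j \<Longrightarrow> v \<in> Omega M (Suc j) \<Longrightarrow> Pk M (Suc j) y (\<lambda>w. - indicator {v} w) < 0"
  using Pk_neg_indicator[OF next_level regular_next, of y v] by simp

lemma finite_Omega_next: "finite (Omega M (Suc j))" using finite_Omega next_level by blast
lemma Omega_next_nonempty: "Omega M (Suc j) \<noteq> {}"
proof -
  obtain x where "x \<in> st M (Suc j)" using st_nonempty[OF next_level] by blast
  then have "cell (Suc j) x \<noteq> {}" using cell_nonempty[OF next_level] by blast
  then show ?thesis unfolding cell_def by blast
qed
lemma finite_out_level: "finite (out M j)" using finite_out level by simp
lemma out_level_nonempty: "out M j \<noteq> {}" using out_nonempty level by simp
lemma S_level_coherent: "y \<in> st M j \<Longrightarrow> coherent_lp (out M j) (Sm M j y)" using S_coherent level by simp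

lemma dom_S_props:
  assumes "y \<in> st M j" "s \<in> dom_S y"
  shows "\<And>u. u \<in> out M j \<Longrightarrow> 0 \<le> s u" "(\<Sum>u\<in>out M j. s u) = 1" "\<And>h. Sm M j y h \<le> lin_prev (out M j) s h"
  using dominates_nonneg[of "out M j" "Sm M j y" s] dominates_sum_eq_1[of "out M j" "Sm M j y" s]
    assms S_level_coherent[OF assms(1)] finite_out_level out_level_nonempty unfolding dom_S_def dominates_def by auto

lemma dom_P_props:
  assumes "y \<in> st M j" "p \<in> dom_P y"
  shows "\<And>v. v \<in> Omega M (Suc j) \<Longrightarrow> 0 \<le> p v" "(\<Sum>v\<in>Omega M (Suc j). p v) = 1"
    "\<And>h. Pk M (Suc j) y h \<le> lin_prev (Omega M (Suc j)) p h"
  using dominates_nonneg[of "Omega M (Suc j)" "Pk M (Suc j) y" p] dominates_sum_eq_1[of "Omega M (Suc j)" "Pk M (Suc j) y" p]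
    assms P_next_coherent[OF assms(1)] finite_Omega_next Omega_next_nonempty unfolding dom_P_def dominates_def by auto

lemma dom_S_attaining: "y \<in> st M j \<Longrightarrow> \<exists>s\<in>dom_S y. lin_prev (out M j) s h = Sm M j y h"
  using dominating_lin_prev_exists[OF S_level_coherent finite_out_level out_level_nonempty] unfolding dom_S_def by blast

lemma dom_P_attaining: "y \<in> st M j \<Longrightarrow> \<exists>p\<in>dom_P y. lin_prev (Omega M (Suc j)) p h = Pk M (Suc j) y h"
  using dominating_lin_prev_exists[OF P_next_coherent finite_Omega_next Omega_next_nonempty] unfolding dom_P_def by blast

lemma prod_prev_const:
  assumes "y \<in> st M j" "s \<in> dom_S y" "p \<in> dom_P y"
  shows "(\<Sum>u\<in>out M j. \<Sum>v\<in>Omega M (Suc j). s u * p v * c) = c"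
proof -
  have "(\<Sum>u\<in>out M j. \<Sum>v\<in>Omega M (Suc j). s u * p v * c) = (\<Sum>u\<in>out M j. s u * c * (\<Sum>v\<in>Omega M (Suc j). p v))"
    by (simp add: sum_distrib_left mult_ac)
  also have "\<dots> = c" using dom_S_props(2)[OF assms(1,2)] dom_P_props(2)[OF assms(1,3)]
    by (simp add: sum_distrib_right[symmetric])
  finally show ?thesis .
qed

lemma prod_prev_coherent:
  assumes y: "y \<in> st M j" and s: "s \<in> dom_S y" and p: "p \<in> dom_P y"
  shows "coherent_lp (cell j y) (prod_prev y s p)"
  unfolding coherent_lp_def
proof (intro conjI allI impI)
  fix f :: "'x list \<times> 'o list \<Rightarrow> real"
  let ?c = "INF x\<in>cell j y. f x"
  have "(\<Sum>u\<in>out M j. \<Sum>v\<in>Omega M (Suc j). s u * p v * ?c) \<le> prod_prev y s p f"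
    unfolding prod_prev_def
  proof (intro sum_mono mult_left_mono)
    fix u v assume u: "u \<in> out M j" and v: "v \<in> Omega M (Suc j)"
    have "(y # fst v, u # snd v) \<in> cell j y" using Omega_Cons[OF level(2)] u v y by (simp add: cell_def)
    then show "?c \<le> f (y # fst v, u # snd v)" by (rule INF_le_finite[OF finite_cell[OF level(1)]])
    show "0 \<le> s u * p v" using dom_S_props(1)[OF y s u] dom_P_props(1)[OF y p v] by simp
  qed
  then show "?c \<le> prod_prev y s p f" using prod_prev_const[OF y s p] by simp
next
  fix l :: real and f :: "'x list \<times> 'o list \<Rightarrow> real"
  show "prod_prev y s p (\<lambda>x. l * f x) = l * prod_prev y s p f" unfolding prod_prev_def
    by (simp add: sum_distrib_left mult_ac)
next
  fix f g :: "'x list \<times> 'o list \<Rightarrow> real"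
  show "prod_prev y s p f + prod_prev y s p g \<le> prod_prev y s p (\<lambda>x. f x + g x)" unfolding prod_prev_def
    by (simp add: sum.distrib distrib_left)
qed

lemma prod_prevs_nonempty: "y \<in> st M j \<Longrightarrow> prod_prevs y \<noteq> {}"
  using dom_S_attaining[of y "\<lambda>_. 0"] dom_P_attaining[of y "\<lambda>_. 0"] unfolding prod_prevs_def by blast

lemma prod_env_coherent: "y \<in> st M j \<Longrightarrow> coherent_lp (cell j y) (prod_env y)"
proof -
  assume y: "y \<in> st M j"
  have "coherent_lp (cell j y) (\<lambda>f. Inf ((\<lambda>\<phi>. \<phi> f) ` prod_prevs y))"
    by (rule coherent_lp_Inf[OF prod_prevs_nonempty[OF y]])
      (auto simp: prod_prevs_def intro: prod_prev_coherent y)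
  then show ?thesis unfolding prod_env_def[abs_def] .
qed

lemma prod_env_bdd: "y \<in> st M j \<Longrightarrow> bdd_below ((\<lambda>\<phi>. \<phi> f) ` prod_prevs y)"
proof -
  assume y: "y \<in> st M j"
  have "(INF x\<in>cell j y. f x) \<le> \<phi> f" if "\<phi> \<in> prod_prevs y" for \<phi>
    using that coherent_lpD(1)[OF prod_prev_coherent[OF y]] unfolding prod_prevs_def by auto
  then show ?thesis by (auto simp: bdd_below_def)
qed

lemma prod_env_le: "y \<in> st M j \<Longrightarrow> s \<in> dom_S y \<Longrightarrow> p \<in> dom_P y \<Longrightarrow> prod_env y f \<le> prod_prev y s p f"
  unfolding prod_env_def by (rule cInf_lower[OF _ prod_env_bdd]) (auto simp: prod_prevs_def)

lemma prod_env_ge: "y \<in> st M j \<Longrightarrow> (\<And>s p. s \<in> dom_S y \<Longrightarrow> p \<in> dom_P y \<Longrightarrow> c \<le> prod_prev y s p f) \<Longrightarrow> c \<le> prod_env y f"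
proof -
  assume y: "y \<in> st M j" and h: "\<And>s p. s \<in> dom_S y \<Longrightarrow> p \<in> dom_P y \<Longrightarrow> c \<le> prod_prev y s p f"
  have "(\<lambda>\<phi>. \<phi> f) ` prod_prevs y \<noteq> {}" using prod_prevs_nonempty[OF y] by simp
  then show ?thesis unfolding prod_env_def by (rule cInf_greatest) (use h in \<open>auto simp: prod_prevs_def\<close>)
qed

lemma prod_env_approx:
  assumes "y \<in> st M j" "\<delta> > 0"
  shows "\<exists>s\<in>dom_S y. \<exists>p\<in>dom_P y. prod_prev y s p f < prod_env y f + \<delta>"
proof -
  have "Inf ((\<lambda>\<phi>. \<phi> f) ` prod_prevs y) < prod_env y f + \<delta>" using assms(2) unfolding prod_env_def by simp
  then obtain x where "x \<in> (\<lambda>\<phi>. \<phi> f) ` prod_prevs y" "x < prod_env y f + \<delta>"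
    using cInf_lessD[of "(\<lambda>\<phi>. \<phi> f) ` prod_prevs y"] prod_prevs_nonempty[OF assms(1)] by blast
  then show ?thesis unfolding prod_prevs_def by auto
qed

lemma prod_prev_hd:
  assumes "y \<in> st M j" "s \<in> dom_S y" "p \<in> dom_P y"
  shows "prod_prev y s p (\<lambda>w. h (hd (snd w))) = lin_prev (out M j) s h"
proof -
  have "prod_prev y s p (\<lambda>w. h (hd (snd w))) = (\<Sum>u\<in>out M j. s u * h u * (\<Sum>v\<in>Omega M (Suc j). p v))"
    unfolding prod_prev_def by (simp add: sum_distrib_left mult_ac)
  then show ?thesis using dom_P_props(2)[OF assms(1,3)] unfolding lin_prev_def by simp
qed

lemma prod_prev_tl:
  assumes "y \<in> st M j" "s \<in> dom_S y" "p \<in> dom_P y"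
  shows "prod_prev y s p (\<lambda>w. h (tl (fst w), tl (snd w))) = lin_prev (Omega M (Suc j)) p h"
proof -
  have "prod_prev y s p (\<lambda>w. h (tl (fst w), tl (snd w))) = (\<Sum>u\<in>out M j. s u * (\<Sum>v\<in>Omega M (Suc j). p v * h v))"
    unfolding prod_prev_def by (simp add: sum_distrib_left mult_ac)
  also have "\<dots> = (\<Sum>u\<in>out M j. s u) * (\<Sum>v\<in>Omega M (Suc j). p v * h v)" by (simp add: sum_distrib_right)
  finally show ?thesis using dom_S_props(2)[OF assms(1,2)] unfolding lin_prev_def by simp
qed

lemma prod_prev_indicator_mult:
  assumes "y \<in> st M j" "s \<in> dom_S y" "p \<in> dom_P y" "o' \<in> out M j"
  shows "prod_prev y s p (\<lambda>w. indicator {o'} (hd (snd w)) * g (tl (fst w), tl (snd w))) = s o' * lin_prev (Omega M (Suc j)) p g"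
proof -
  have "prod_prev y s p (\<lambda>w. indicator {o'} (hd (snd w)) * g (tl (fst w), tl (snd w)))
      = (\<Sum>u\<in>out M j. (if u = o' then s u * (\<Sum>v\<in>Omega M (Suc j). p v * g v) else 0))"
    unfolding prod_prev_def by (rule sum.cong) (auto simp: sum_distrib_left mult_ac indicator_def)
  then show ?thesis using assms(4) finite_out_level unfolding lin_prev_def by (simp add: sum.delta')
qed

lemma prod_env_hd: "y \<in> st M j \<Longrightarrow> prod_env y (\<lambda>w. h (hd (snd w))) = Sm M j y h"
proof (rule antisym)
  assume y: "y \<in> st M j"
  obtain s where s: "s \<in> dom_S y" "lin_prev (out M j) s h = Sm M j y h" using dom_S_attaining[OF y] by blast
  obtain p where p: "p \<in> dom_P y" using dom_P_attaining[OF y] by blast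
  show "prod_env y (\<lambda>w. h (hd (snd w))) \<le> Sm M j y h"
    using prod_env_le[OF y s(1) p, of "\<lambda>w. h (hd (snd w))"] prod_prev_hd[OF y s(1) p] s(2) by simp
  show "Sm M j y h \<le> prod_env y (\<lambda>w. h (hd (snd w)))"
    by (rule prod_env_ge[OF y]) (simp add: prod_prev_hd[OF y] dom_S_props(3)[OF y])
qed

lemma prod_env_tl: "y \<in> st M j \<Longrightarrow> prod_env y (\<lambda>w. h (tl (fst w), tl (snd w))) = Pk M (Suc j) y h"
proof (rule antisym)
  assume y: "y \<in> st M j"
  obtain p where p: "p \<in> dom_P y" "lin_prev (Omega M (Suc j)) p h = Pk M (Suc j) y h" using dom_P_attaining[OF y] by blast
  obtain s where s: "s \<in> dom_S y" using dom_S_attaining[OF y] by blast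
  show "prod_env y (\<lambda>w. h (tl (fst w), tl (snd w))) \<le> Pk M (Suc j) y h"
    using prod_env_le[OF y s p(1), of "\<lambda>w. h (tl (fst w), tl (snd w))"] prod_prev_tl[OF y s p(1)] p(2) by simp
  show "Pk M (Suc j) y h \<le> prod_env y (\<lambda>w. h (tl (fst w), tl (snd w)))"
    by (rule prod_env_ge[OF y]) (simp add: prod_prev_tl[OF y] dom_P_props(3)[OF y])
qed

end

context ihmm_level
begin

abbreviation "assess_E \<equiv> E_assessment M j prod_env"
abbreviation "assess_S \<equiv> S_assessment M j"
abbreviation "assess_P \<equiv> P_assessment M j (Pk M (Suc j))"

definition weight :: "'x \<Rightarrow> ('o \<Rightarrow> real) \<Rightarrow> ('x list \<times> 'o list \<Rightarrow> real) \<Rightarrow> 'x list \<times> 'o list \<Rightarrow> real" where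
  "weight z s p w = (if w \<in> Omega M j \<and> hd (fst w) = z then s (hd (snd w)) * p (tl (fst w), tl (snd w)) else 0)"

lemma sum_weight:
  assumes z: "z \<in> st M j"
  shows "(\<Sum>w\<in>Omega M j. weight z s p w * G w) = (\<Sum>u\<in>out M j. \<Sum>v\<in>Omega M (Suc j). s u * p v * G (z # fst v, u # snd v))"
proof -
  have "(\<Sum>w\<in>Omega M j. weight z s p w * G w) =
      (\<Sum>w\<in>Omega M j. if hd (fst w) = z then s (hd (snd w)) * p (tl (fst w), tl (snd w)) * G w else 0)"
    unfolding weight_def by (rule sum.cong) auto
  also have "\<dots> = (\<Sum>u\<in>out M j. \<Sum>v\<in>Omega M (Suc j). s u * p v * G (z # fst v, u # snd v))"
    by (subst sum_cell_split[OF level z]) simp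
  finally show ?thesis .
qed

lemma weight_nonneg:
  assumes "z \<in> st M j" "s \<in> dom_S z" "p \<in> dom_P z"
  shows "0 \<le> weight z s p w"
proof (cases "w \<in> Omega M j \<and> hd (fst w) = z")
  case True
  then have "hd (snd w) \<in> out M j" "(tl (fst w), tl (snd w)) \<in> Omega M (Suc j)"
    using Omega_iff_hd_tl[OF level(2)] by auto
  then show ?thesis using True dom_S_props(1)[OF assms(1,2)] dom_P_props(1)[OF assms(1,3)] unfolding weight_def by simp
qed (auto simp: weight_def)

lemma Cons_pair_in_Omega: "z \<in> st M j \<Longrightarrow> u \<in> out M j \<Longrightarrow> v \<in> Omega M (Suc j) \<Longrightarrow> (z # fst v, u # snd v) \<in> Omega M j"
  using Omega_Cons[OF level(2), of z "fst v" u "snd v"] by simp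

lemma sum_weight_subset:
  assumes z: "z \<in> st M j" and B: "B \<subseteq> Omega M j"
  shows "(\<Sum>w\<in>B. weight z s p w) = (\<Sum>w\<in>Omega M j. weight z s p w * indicator B w)"
proof -
  have "(\<Sum>w\<in>Omega M j. weight z s p w * indicator B w) = (\<Sum>w\<in>Omega M j \<inter> B. weight z s p w)"
    using finite_Omega[OF level(1)] by (simp add: sum.inter_restrict indicator_def if_distrib cong: if_cong)
  then show ?thesis using B by (simp add: Int_absorb1)
qed

lemma weighted_gain_E:
  assumes z: "z \<in> st M j" and s: "s \<in> dom_S z" and p: "p \<in> dom_P z" and w0: "w0 \<in> Omega M j"
    and B: "B = {v \<in> Omega M j. hd (fst v) = hd (fst w0)}"
  shows "(\<Sum>w\<in>Omega M j. weight z s p w * gain (snd assess_E) B f w)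
     = (if z = hd (fst w0) then prod_prev z s p f - prod_env z f else 0)"
    (is "?L = ?R")
proof -
  let ?x = "hd (fst w0)"
  have r: "hd (fst (SOME w. w \<in> B)) = ?x" using someI[of "\<lambda>w. w \<in> B" w0] w0 B by auto
  have "?L = (\<Sum>u\<in>out M j. \<Sum>v\<in>Omega M (Suc j). s u * p v * (if z = ?x then f (z # fst v, u # snd v) - prod_env z f else 0))"
    unfolding E_assessment_def snd_conv sum_weight[OF z] gain_def r
    by (intro sum.cong refl) (auto simp: B indicator_def Cons_pair_in_Omega[OF z])
  also have "\<dots> = ?R"
  proof (cases "z = ?x")
    case True
    have "(\<Sum>u\<in>out M j. \<Sum>v\<in>Omega M (Suc j). s u * p v * (f (z # fst v, u # snd v) - prod_env z f))
        = prod_prev z s p f - (\<Sum>u\<in>out M j. \<Sum>v\<in>Omega M (Suc j). s u * p v * prod_env z f)"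
      unfolding prod_prev_def by (simp add: right_diff_distrib sum_subtractf)
    then show ?thesis using True prod_prev_const[OF z s p] by simp
  qed simp
  finally show ?thesis .
qed

lemma weighted_gain_S:
  assumes z: "z \<in> st M j" and s: "s \<in> dom_S z" and p: "p \<in> dom_P z" and w0: "w0 \<in> Omega M j"
    and B: "B = {v \<in> Omega M j. (hd (fst v), tl (fst v), tl (snd v)) = (hd (fst w0), tl (fst w0), tl (snd w0))}"
  shows "(\<Sum>w\<in>Omega M j. weight z s p w * gain (snd assess_S) B f w)
     = (if z = hd (fst w0) then p (tl (fst w0), tl (snd w0)) *
          (lin_prev (out M j) s (\<lambda>u. f (fst w0, u # tl (snd w0))) - Sm M j z (\<lambda>u. f (fst w0, u # tl (snd w0)))) else 0)"
    (is "?L = ?R")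
proof -
  let ?x = "hd (fst w0)" and ?a = "tl (fst w0)" and ?b = "tl (snd w0)"
  define r where "r = (SOME w. w \<in> B)"
  have rB: "r \<in> B" using someI[of "\<lambda>w. w \<in> B" w0] w0 B unfolding r_def by auto
  have w0s: "fst w0 \<noteq> []" "(?a, ?b) \<in> Omega M (Suc j)" using w0 Omega_iff_hd_tl[OF level(2)] by auto
  have rs: "fst r \<noteq> []" using rB B Omega_iff_hd_tl[OF level(2)] by auto
  have k: "hd (fst r) = hd (fst w0)" "tl (fst r) = tl (fst w0)" using rB B by auto
  have fr: "fst r = fst w0" using k rs w0s(1) by (metis list.collapse)
  have sr: "tl (snd r) = ?b" using rB B by auto
  define h where "h = (\<lambda>u. f (fst w0, u # ?b))"
  obtain x0 a0 where fw0: "fst w0 = x0 # a0" using w0s(1) by (cases "fst w0") auto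
  have mem: "(z # fst v, u # snd v) \<in> B \<longleftrightarrow> z = ?x \<and> v = (?a, ?b)"
    if "u \<in> out M j" "v \<in> Omega M (Suc j)" for u v
    using Cons_pair_in_Omega[OF z that] unfolding B by (cases v) auto
  have "?L = (\<Sum>u\<in>out M j. \<Sum>v\<in>Omega M (Suc j). if v = (?a, ?b) then
         (if z = ?x then s u * p v * (f (z # fst v, u # snd v) - Sm M j ?x h) else 0) else 0)"
    unfolding S_assessment_def snd_conv sum_weight[OF z] gain_def Let_def r_def[symmetric] fr sr h_def
    by (intro sum.cong refl) (auto simp: mem indicator_def)
  also have "\<dots> = (\<Sum>u\<in>out M j. if z = ?x then s u * p (?a, ?b) * (h u - Sm M j ?x h) else 0)"
    using finite_Omega_next w0s(2) unfolding h_def fw0 by (intro sum.cong refl) (simp add: sum.delta')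
  also have "\<dots> = ?R"
    using lin_prev_deviation[OF dom_S_props(2)[OF z s], of "p (?a, ?b)" h] unfolding h_def by simp
  finally show ?thesis .
qed

lemma weighted_gain_P:
  assumes z: "z \<in> st M j" and s: "s \<in> dom_S z" and p: "p \<in> dom_P z" and w0: "w0 \<in> Omega M j"
    and B: "B = {v \<in> Omega M j. (hd (fst v), hd (snd v)) = (hd (fst w0), hd (snd w0))}"
  shows "(\<Sum>w\<in>Omega M j. weight z s p w * gain (snd assess_P) B f w)
     = (if z = hd (fst w0) then s (hd (snd w0)) *
          (lin_prev (Omega M (Suc j)) p (\<lambda>v. f (z # fst v, hd (snd w0) # snd v))
           - Pk M (Suc j) z (\<lambda>v. f (z # fst v, hd (snd w0) # snd v))) else 0)"
    (is "?L = ?R")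
proof -
  let ?x = "hd (fst w0)" and ?o = "hd (snd w0)"
  define r where "r = (SOME w. w \<in> B)"
  have rB: "r \<in> B" using someI[of "\<lambda>w. w \<in> B" w0] w0 B unfolding r_def by auto
  have hr: "hd (fst r) = ?x" "hd (snd r) = ?o" using rB B by auto
  have o: "?o \<in> out M j" using w0 Omega_iff_hd_tl[OF level(2)] by auto
  define g where "g = (\<lambda>v. f (?x # fst v, ?o # snd v))"
  have "?L = (\<Sum>u\<in>out M j. if u = ?o then
         (if z = ?x then (\<Sum>v\<in>Omega M (Suc j). s u * p v * (f (z # fst v, u # snd v) - Pk M (Suc j) ?x g)) else 0) else 0)"
    unfolding P_assessment_def snd_conv sum_weight[OF z] gain_def Let_def r_def[symmetric] hr g_def
    by (intro sum.cong refl) (auto simp: B indicator_def Cons_pair_in_Omega[OF z])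
  also have "\<dots> = (if z = ?x then (\<Sum>v\<in>Omega M (Suc j). s ?o * p v * (g v - Pk M (Suc j) ?x g)) else 0)"
    using finite_out_level o unfolding g_def by (simp add: sum.delta')
  also have "\<dots> = ?R"
    using lin_prev_deviation[OF dom_P_props(2)[OF z p], of "s ?o" g] unfolding g_def by (simp add: mult.commute)
  finally show ?thesis .
qed

lemma hd_fst_in_st: "w0 \<in> Omega M j \<Longrightarrow> hd (fst w0) \<in> st M j"
  using Omega_iff_hd_tl[OF level(2)] by auto

lemma hd_snd_in_out: "w0 \<in> Omega M j \<Longrightarrow> hd (snd w0) \<in> out M j"
  using Omega_iff_hd_tl[OF level(2)] by auto

lemma tl_in_Omega_next: "w0 \<in> Omega M j \<Longrightarrow> (tl (fst w0), tl (snd w0)) \<in> Omega M (Suc j)"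
  using Omega_iff_hd_tl[OF level(2)] by auto

lemma weighted_gains_nonneg:
  assumes z: "z \<in> st M j" and s: "s \<in> dom_S z" and p: "p \<in> dom_P z"
    and i: "i < length [assess_E, assess_S, assess_P]" and B: "B \<in> fst ([assess_E, assess_S, assess_P] ! i)"
  shows "0 \<le> (\<Sum>w\<in>Omega M j. weight z s p w * gain (snd ([assess_E, assess_S, assess_P] ! i)) B f w)"
proof -
  consider "i = 0" | "i = Suc 0" | "i = Suc (Suc 0)" using i by (auto simp: less_Suc_eq)
  then show ?thesis
  proof cases
    case 1
    then obtain w0 where w0: "w0 \<in> Omega M j" "B = {v \<in> Omega M j. hd (fst v) = hd (fst w0)}"
      using B by (auto elim: cells_memE simp: E_assessment_def S_assessment_def P_assessment_def)
    show ?thesis using 1 weighted_gain_E[OF z s p w0, of f] prod_env_le[OF z s p, of f] by (cases "z = hd (fst w0)") auto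
  next
    case 2
    then obtain w0 where w0: "w0 \<in> Omega M j" "B = {v \<in> Omega M j. (hd (fst v), tl (fst v), tl (snd v)) = (hd (fst w0), tl (fst w0), tl (snd w0))}"
      using B by (auto elim: cells_memE simp: E_assessment_def S_assessment_def P_assessment_def)
    have "0 \<le> p (tl (fst w0), tl (snd w0))" using dom_P_props(1)[OF z p tl_in_Omega_next[OF w0(1)]] .
    moreover have "Sm M j z (\<lambda>u. f (fst w0, u # tl (snd w0))) \<le> lin_prev (out M j) s (\<lambda>u. f (fst w0, u # tl (snd w0)))"
      using dom_S_props(3)[OF z s] .
    ultimately have "0 \<le> (if z = hd (fst w0) then p (tl (fst w0), tl (snd w0)) *
          (lin_prev (out M j) s (\<lambda>u. f (fst w0, u # tl (snd w0))) - Sm M j z (\<lambda>u. f (fst w0, u # tl (snd w0)))) else 0)"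
      by (cases "z = hd (fst w0)") (auto intro!: mult_nonneg_nonneg)
    then show ?thesis using 2 weighted_gain_S[OF z s p w0, of f] by simp
  next
    case 3
    then obtain w0 where w0: "w0 \<in> Omega M j" "B = {v \<in> Omega M j. (hd (fst v), hd (snd v)) = (hd (fst w0), hd (snd w0))}"
      using B by (auto elim: cells_memE simp: E_assessment_def S_assessment_def P_assessment_def)
    have "0 \<le> s (hd (snd w0))" using dom_S_props(1)[OF z s hd_snd_in_out[OF w0(1)]] .
    moreover have "Pk M (Suc j) z (\<lambda>v. f (z # fst v, hd (snd w0) # snd v)) \<le> lin_prev (Omega M (Suc j)) p (\<lambda>v. f (z # fst v, hd (snd w0) # snd v))"
      using dom_P_props(3)[OF z p] .
    ultimately have "0 \<le> (if z = hd (fst w0) then s (hd (snd w0)) *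
          (lin_prev (Omega M (Suc j)) p (\<lambda>v. f (z # fst v, hd (snd w0) # snd v))
           - Pk M (Suc j) z (\<lambda>v. f (z # fst v, hd (snd w0) # snd v))) else 0)"
      by (cases "z = hd (fst w0)") (auto intro!: mult_nonneg_nonneg)
    then show ?thesis using 3 weighted_gain_P[OF z s p w0, of f] by simp
  qed
qed

lemma weight_mass_E:
  assumes z: "z \<in> st M j" and s: "s \<in> dom_S z" and p: "p \<in> dom_P z"
  shows "(\<Sum>w\<in>{v \<in> Omega M j. hd (fst v) = z}. weight z s p w) = 1"
proof -
  have "(\<Sum>w\<in>{v \<in> Omega M j. hd (fst v) = z}. weight z s p w)
     = (\<Sum>w\<in>Omega M j. weight z s p w * indicator {v \<in> Omega M j. hd (fst v) = z} w)"
    by (rule sum_weight_subset[OF z]) auto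
  also have "\<dots> = (\<Sum>u\<in>out M j. \<Sum>v\<in>Omega M (Suc j). s u * p v * 1)"
    unfolding sum_weight[OF z] by (intro sum.cong refl) (simp add: indicator_def Cons_pair_in_Omega[OF z])
  also have "\<dots> = 1" using prod_prev_const[OF z s p] .
  finally show ?thesis .
qed

lemma weight_mass_S:
  assumes z: "z \<in> st M j" and s: "s \<in> dom_S z" and p: "p \<in> dom_P z" and ab: "(a, b) \<in> Omega M (Suc j)"
  shows "(\<Sum>w\<in>{v \<in> Omega M j. (hd (fst v), tl (fst v), tl (snd v)) = (z, a, b)}. weight z s p w) = p (a, b)"
proof -
  let ?B = "{v \<in> Omega M j. (hd (fst v), tl (fst v), tl (snd v)) = (z, a, b)}"
  have "(\<Sum>w\<in>?B. weight z s p w) = (\<Sum>w\<in>Omega M j. weight z s p w * indicator ?B w)"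
    by (rule sum_weight_subset[OF z]) auto
  also have "\<dots> = (\<Sum>u\<in>out M j. \<Sum>v\<in>Omega M (Suc j). if v = (a, b) then s u * p v else 0)"
    unfolding sum_weight[OF z] by (intro sum.cong refl) (auto simp: indicator_def Cons_pair_in_Omega[OF z])
  also have "\<dots> = (\<Sum>u\<in>out M j. s u * p (a, b))" using finite_Omega_next ab by (simp add: sum.delta')
  also have "\<dots> = p (a, b)" using dom_S_props(2)[OF z s] by (simp add: sum_distrib_right[symmetric])
  finally show ?thesis .
qed

lemma weight_mass_P:
  assumes z: "z \<in> st M j" and s: "s \<in> dom_S z" and p: "p \<in> dom_P z" and o: "o' \<in> out M j"
  shows "(\<Sum>w\<in>{v \<in> Omega M j. (hd (fst v), hd (snd v)) = (z, o')}. weight z s p w) = s o'"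
proof -
  let ?B = "{v \<in> Omega M j. (hd (fst v), hd (snd v)) = (z, o')}"
  have "(\<Sum>w\<in>?B. weight z s p w) = (\<Sum>w\<in>Omega M j. weight z s p w * indicator ?B w)"
    by (rule sum_weight_subset[OF z]) auto
  also have "\<dots> = (\<Sum>u\<in>out M j. if u = o' then (\<Sum>v\<in>Omega M (Suc j). s u * p v) else 0)"
    unfolding sum_weight[OF z] by (intro sum.cong refl) (auto simp: indicator_def Cons_pair_in_Omega[OF z])
  also have "\<dots> = (\<Sum>v\<in>Omega M (Suc j). s o' * p v)" using finite_out_level o by (simp add: sum.delta')
  also have "\<dots> = s o'" using dom_P_props(2)[OF z p] by (simp add: sum_distrib_left[symmetric])
  finally show ?thesis .
qed

lemma assess_E_vanishing:
  assumes B: "B \<in> fst assess_E" and f0: "\<forall>v\<in>B. f v = 0"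
  shows "snd assess_E B f = 0"
proof -
  obtain w0 where w0: "w0 \<in> Omega M j" "B = {v \<in> Omega M j. hd (fst v) = hd (fst w0)}"
    using B unfolding E_assessment_def by (auto elim: cells_memE)
  define x where "x = hd (fst w0)"
  have x: "x \<in> st M j" using hd_fst_in_st[OF w0(1)] x_def by simp
  have r: "hd (fst (SOME w. w \<in> B)) = x" using someI[of "\<lambda>w. w \<in> B" w0] w0 x_def by auto
  have c: "coherent_lp (cell j x) (prod_env x)" using prod_env_coherent[OF x] .
  have "prod_env x f = prod_env x (\<lambda>w. 0)"
    by (rule coherent_lp_cong[OF c cell_nonempty[OF level(1) less_imp_le[OF level(2)] x]])
      (use f0 w0 x_def in \<open>auto simp: cell_def\<close>)
  then show ?thesis using r coherent_lp_zero[OF c] unfolding E_assessment_def by simp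
qed

lemma assess_S_vanishing:
  assumes B: "B \<in> fst assess_S" and f0: "\<forall>v\<in>B. f v = 0"
  shows "snd assess_S B f = 0"
proof -
  define r where "r = (SOME w. w \<in> B)"
  obtain w0 where w0: "w0 \<in> Omega M j"
    "B = {v \<in> Omega M j. (hd (fst v), tl (fst v), tl (snd v)) = (hd (fst w0), tl (fst w0), tl (snd w0))}"
    using B unfolding S_assessment_def by (auto elim: cells_memE)
  have rB: "r \<in> B" using someI[of "\<lambda>w. w \<in> B" w0] w0 unfolding r_def by auto
  then have r\<Omega>: "r \<in> Omega M j" using w0 by auto
  have x: "hd (fst r) \<in> st M j" using hd_fst_in_st[OF r\<Omega>] .
  have "(fst r, u # tl (snd r)) \<in> B" if u: "u \<in> out M j" for u
  proof -
    have "(fst r, u # tl (snd r)) \<in> Omega M j"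
      using Omega_iff_hd_tl[OF level(2), of "(fst r, u # tl (snd r))"] Omega_iff_hd_tl[OF level(2), of r] r\<Omega> u
      by auto
    then show ?thesis using rB w0(2) by auto
  qed
  then have "Sm M j (hd (fst r)) (\<lambda>u. f (fst r, u # tl (snd r))) = Sm M j (hd (fst r)) (\<lambda>u. 0)"
    using f0 by (intro coherent_lp_cong[OF S_level_coherent[OF x] out_level_nonempty]) auto
  then show ?thesis using coherent_lp_zero[OF S_level_coherent[OF x]]
    unfolding r_def S_assessment_def by (simp add: Let_def)
qed

lemma assess_P_vanishing:
  assumes B: "B \<in> fst assess_P" and f0: "\<forall>v\<in>B. f v = 0"
  shows "snd assess_P B f = 0"
proof -
  define r where "r = (SOME w. w \<in> B)"
  obtain w0 where w0: "w0 \<in> Omega M j" "B = {v \<in> Omega M j. (hd (fst v), hd (snd v)) = (hd (fst w0), hd (snd w0))}"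
    using B unfolding P_assessment_def by (auto elim: cells_memE)
  have rB: "r \<in> B" using someI[of "\<lambda>w. w \<in> B" w0] w0 unfolding r_def by auto
  then have r\<Omega>: "r \<in> Omega M j" using w0 by auto
  have x: "hd (fst r) \<in> st M j" using hd_fst_in_st[OF r\<Omega>] .
  have "(hd (fst r) # fst v, hd (snd r) # snd v) \<in> B" if v: "v \<in> Omega M (Suc j)" for v
    using Cons_pair_in_Omega[OF x hd_snd_in_out[OF r\<Omega>] v] rB w0(2) by auto
  then have "Pk M (Suc j) (hd (fst r)) (\<lambda>v. f (hd (fst r) # fst v, hd (snd r) # snd v))
      = Pk M (Suc j) (hd (fst r)) (\<lambda>v. 0)"
    using f0 by (intro coherent_lp_cong[OF P_next_coherent[OF x] Omega_next_nonempty]) auto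
  then show ?thesis using coherent_lp_zero[OF P_next_coherent[OF x]]
    unfolding r_def P_assessment_def by (simp add: Let_def)
qed

lemma weight_certifying:
  assumes "z \<in> st M j" "s \<in> dom_S z" "p \<in> dom_P z"
    and "0 < (\<Sum>w\<in>B0. weight z s p w)"
    and "(\<Sum>w\<in>Omega M j. weight z s p w * gain P0 B0 f0 w) \<le> \<delta> * (\<Sum>w\<in>B0. weight z s p w)"
  shows "certifying_weights [assess_E, assess_S, assess_P] (Omega M j) P0 B0 f0 \<delta> (weight z s p)"
  unfolding certifying_weights_def using weight_nonneg[OF assms(1-3)] weighted_gains_nonneg[OF assms(1-3)] assms(4,5)
  by blast

text \<open>For the three kinds of cells the weights are the product \<open>s \<otimes> p\<close> with \<open>s\<close>, \<open>p\<close> chosen to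
  nearly attain the envelope, resp. to attain \<open>S_j\<close> and charge the tail, resp. to attain
  \<open>P_{j+1}\<close> and charge the output; positivity makes the mass of the cell positive.\<close>

lemma assess_E_weights:
  assumes B0: "B0 \<in> fst assess_E" and \<delta>: "\<delta> > 0"
  shows "\<exists>m. certifying_weights [assess_E, assess_S, assess_P] (Omega M j) (snd assess_E) B0 f0 \<delta> m"
proof -
  obtain w0 where w0: "w0 \<in> Omega M j" "B0 = {v \<in> Omega M j. hd (fst v) = hd (fst w0)}"
    using B0 unfolding E_assessment_def by (auto elim: cells_memE)
  define z where "z = hd (fst w0)"
  have z: "z \<in> st M j" using hd_fst_in_st[OF w0(1)] z_def by simp
  obtain s p where s: "s \<in> dom_S z" and p: "p \<in> dom_P z" and lt: "prod_prev z s p f0 < prod_env z f0 + \<delta>"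
    using prod_env_approx[OF z \<delta>] by blast
  have m: "(\<Sum>w\<in>B0. weight z s p w) = 1" using weight_mass_E[OF z s p] w0(2) z_def by simp
  have "(\<Sum>w\<in>Omega M j. weight z s p w * gain (snd assess_E) B0 f0 w) \<le> \<delta> * (\<Sum>w\<in>B0. weight z s p w)"
    using weighted_gain_E[OF z s p w0, of f0] m lt z_def by simp
  then show ?thesis using weight_certifying[OF z s p, of B0] m by auto
qed

lemma assess_S_weights:
  assumes B0: "B0 \<in> fst assess_S" and \<delta>: "\<delta> > 0"
  shows "\<exists>m. certifying_weights [assess_E, assess_S, assess_P] (Omega M j) (snd assess_S) B0 f0 \<delta> m"
proof -
  obtain w0 where w0: "w0 \<in> Omega M j"
    "B0 = {v \<in> Omega M j. (hd (fst v), tl (fst v), tl (snd v)) = (hd (fst w0), tl (fst w0), tl (snd w0))}"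
    using B0 unfolding S_assessment_def by (auto elim: cells_memE)
  define z where "z = hd (fst w0)"
  define a where "a = tl (fst w0)"
  define b where "b = tl (snd w0)"
  have z: "z \<in> st M j" using hd_fst_in_st[OF w0(1)] z_def by simp
  have ab: "(a, b) \<in> Omega M (Suc j)" using tl_in_Omega_next[OF w0(1)] a_def b_def by simp
  obtain s where s: "s \<in> dom_S z"
    and sh: "lin_prev (out M j) s (\<lambda>u. f0 (fst w0, u # tl (snd w0))) = Sm M j z (\<lambda>u. f0 (fst w0, u # tl (snd w0)))"
    using dom_S_attaining[OF z] by blast
  obtain p where p: "p \<in> dom_P z"
    and ph: "lin_prev (Omega M (Suc j)) p (\<lambda>w. - indicator {(a, b)} w) = Pk M (Suc j) z (\<lambda>w. - indicator {(a, b)} w)"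
    using dom_P_attaining[OF z] by blast
  have ppos: "p (a, b) > 0"
    using ph P_next_neg_indicator[OF z ab] lin_prev_neg_indicator[OF finite_Omega_next ab, of p] by simp
  have m: "(\<Sum>w\<in>B0. weight z s p w) = p (a, b)"
    using weight_mass_S[OF z s p ab] w0(2) z_def a_def b_def by simp
  have "(\<Sum>w\<in>Omega M j. weight z s p w * gain (snd assess_S) B0 f0 w) \<le> \<delta> * (\<Sum>w\<in>B0. weight z s p w)"
    using weighted_gain_S[OF z s p w0, of f0] m ppos \<delta> sh z_def by simp
  then show ?thesis using weight_certifying[OF z s p, of B0] m ppos by auto
qed

lemma assess_P_weights:
  assumes B0: "B0 \<in> fst assess_P" and \<delta>: "\<delta> > 0"
  shows "\<exists>m. certifying_weights [assess_E, assess_S, assess_P] (Omega M j) (snd assess_P) B0 f0 \<delta> m"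
proof -
  obtain w0 where w0: "w0 \<in> Omega M j" "B0 = {v \<in> Omega M j. (hd (fst v), hd (snd v)) = (hd (fst w0), hd (snd w0))}"
    using B0 unfolding P_assessment_def by (auto elim: cells_memE)
  define z where "z = hd (fst w0)"
  define o' where "o' = hd (snd w0)"
  have z: "z \<in> st M j" using hd_fst_in_st[OF w0(1)] z_def by simp
  have o: "o' \<in> out M j" using hd_snd_in_out[OF w0(1)] o'_def by simp
  obtain p where p: "p \<in> dom_P z"
    and ph: "lin_prev (Omega M (Suc j)) p (\<lambda>v. f0 (z # fst v, o' # snd v)) = Pk M (Suc j) z (\<lambda>v. f0 (z # fst v, o' # snd v))"
    using dom_P_attaining[OF z] by blast
  obtain s where s: "s \<in> dom_S z"
    and sh: "lin_prev (out M j) s (\<lambda>w. - indicator {o'} w) = Sm M j z (\<lambda>w. - indicator {o'} w)"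
    using dom_S_attaining[OF z] by blast
  have "Sm M j z (\<lambda>w. - indicator {o'} w) < 0"
    using S_upper_pos[OF level(1) less_imp_le[OF level(2)] z o] unfolding upper_def by simp
  then have spos: "s o' > 0" using sh lin_prev_neg_indicator[OF finite_out_level o, of s] by simp
  have m: "(\<Sum>w\<in>B0. weight z s p w) = s o'" using weight_mass_P[OF z s p o] w0(2) z_def o'_def by simp
  have "(\<Sum>w\<in>Omega M j. weight z s p w * gain (snd assess_P) B0 f0 w) \<le> \<delta> * (\<Sum>w\<in>B0. weight z s p w)"
    using weighted_gain_P[OF z s p w0, of f0] m spos \<delta> ph z_def o'_def by simp
  then show ?thesis using weight_certifying[OF z s p, of B0] m spos by auto
qed

lemma prod_env_walley_coherent: "walley_coherent [assess_E, assess_S, assess_P]"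
proof (rule walley_coherentI[where \<Omega> = "Omega M j"])
  show "finite (Omega M j)" using finite_Omega[OF level(1)] .
  show "B \<subseteq> Omega M j" if "i < length [assess_E, assess_S, assess_P]" "B \<in> fst ([assess_E, assess_S, assess_P] ! i)" for i B
    using that unfolding E_assessment_def S_assessment_def P_assessment_def
    by (auto simp: less_Suc_eq cells_def)
  show "snd ([assess_E, assess_S, assess_P] ! i) B f = 0"
    if "i < length [assess_E, assess_S, assess_P]" "B \<in> fst ([assess_E, assess_S, assess_P] ! i)" "\<forall>v\<in>B. f v = 0" for i B f
    using that assess_E_vanishing assess_S_vanishing assess_P_vanishing by (auto simp: less_Suc_eq)
  show "\<exists>m. certifying_weights [assess_E, assess_S, assess_P] (Omega M j) (snd ([assess_E, assess_S, assess_P] ! i)) B f \<delta> m"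
    if "i < length [assess_E, assess_S, assess_P]" "B \<in> fst ([assess_E, assess_S, assess_P] ! i)" "\<delta> > 0" for i B f \<delta>
    using that assess_E_weights assess_S_weights assess_P_weights by (auto simp: less_Suc_eq)
qed

lemma prod_env_ine_cand: "ine_cand M j (Pk M (Suc j)) prod_env"
  unfolding ine_cand_iff
  using prod_env_coherent prod_env_hd prod_env_tl prod_env_walley_coherent unfolding cell_def by blast

end

section \<open>Factorisation of the natural extension\<close>

lemma sum_lessThan_3: "(\<Sum>i<length [a, b, c]. F i) = F 0 + F (Suc 0) + (F (Suc (Suc 0)) :: real)"
  by (simp add: lessThan_Suc)

context ihmm_level
begin

text \<open>Every candidate satisfies \<open>E(I_{o'}(O_j) g | y) \<ge> S_j(c I_{o'} | y)\<close> with \<open>c = P_{j+1}(g|y)\<close>: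
  apply Walley coherence to the gamble \<open>c I_{o'}(O_j)\<close> for \<open>S_j\<close> and \<open>I_{o'}(O_j) g\<close> for
  \<open>P_{j+1}\<close>, both restricted to the cell of \<open>y\<close>, against \<open>I_{o'}(O_j) g\<close> for \<open>E\<close>; the three
  gains telescope.\<close>

lemma ine_cand_ge_atom_prev:
  assumes cand: "ine_cand M j (Pk M (Suc j)) E" and y: "y \<in> st M j" and o: "o' \<in> out M j"
  shows "atom_prev (Sm M j y) o' (Pk M (Suc j) y g)
    \<le> E y (\<lambda>w. indicator {o'} (hd (snd w)) * g (tl (fst w), tl (snd w)))"
proof -
  let ?F = "\<lambda>w. indicator {o'} (hd (snd w)) * g (tl (fst w), tl (snd w))"
  let ?c = "Pk M (Suc j) y g"
  let ?L = "[E_assessment M j E, S_assessment M j, P_assessment M j (Pk M (Suc j))]"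
  have W: "walley_coherent ?L" and Ecoh: "coherent_lp (cell j y) (E y)"
    using cand y unfolding ine_cand_iff cell_def by blast+
  define fs where "fs i w = (if hd (fst w) \<noteq> y \<or> i = (0::nat) then 0
      else if i = 1 then ?c * indicator {o'} (hd (snd w)) else ?F w)" for i w
  obtain w0 where w0: "w0 \<in> cell j y" using cell_nonempty[OF level(1) less_imp_le[OF level(2)] y] by blast
  then have B0: "cell j y \<in> fst (?L ! 0)"
    unfolding E_assessment_def cells_def by (auto simp: cell_def intro!: image_eqI[where x = w0])
  obtain w where wm: "w \<in> cell j y \<union> (\<Union>i<length ?L. \<Union>{B \<in> fst (?L ! i). \<exists>v\<in>B. fs i v \<noteq> 0})"
    and wge: "(\<Sum>i<length ?L. \<Sum>B\<in>fst (?L ! i). gain (snd (?L ! i)) B (fs i) w)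
                - gain (snd (?L ! 0)) (cell j y) ?F w \<ge> 0"
    using walley_coherentD[OF W _ B0, where fs = fs and fa = ?F] by blast
  have "w \<in> cell j y"
    by (rule witness_in_cell[OF wm]) (simp add: fs_def split: if_splits)
  then have w: "w \<in> Omega M j" "hd (fst w) = y" unfolding cell_def by auto
  have "fs 0 = (\<lambda>_. 0)" unfolding fs_def by simp
  then have g0: "(\<Sum>B\<in>fst (?L ! 0). gain (snd (?L ! 0)) B (fs 0) w) = 0"
    using sum_gains_E_assessment[OF level(1) w(1), of E "fs 0"] coherent_lp_zero[OF Ecoh] w(2) by simp
  have g1: "(\<Sum>B\<in>fst (?L ! 1). gain (snd (?L ! 1)) B (fs 1) w)
      = ?c * indicator {o'} (hd (snd w)) - atom_prev (Sm M j y) o' ?c"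
    using sum_gains_S_assessment[OF level w(1), of "fs 1"] w(2)
      coherent_lp_scaled_indicator[OF S_level_coherent[OF y]] by (simp add: fs_def)
  have "Pk M (Suc j) y (\<lambda>v. indicator {o'} (hd (snd w)) * g v) = indicator {o'} (hd (snd w)) * ?c"
    using coherent_lp_scale_nonneg[OF P_next_coherent[OF y]] by simp
  then have g2: "(\<Sum>B\<in>fst (?L ! 2). gain (snd (?L ! 2)) B (fs 2) w) = ?F w - indicator {o'} (hd (snd w)) * ?c"
    using sum_gains_P_assessment[OF level(1) w(1), of _ "fs 2"] w(2) by (simp add: fs_def)
  have "gain (snd (?L ! 0)) (cell j y) ?F w = ?F w - E y ?F"
  proof -
    have "hd (fst (SOME v. v \<in> cell j y)) = y" using someI[of "\<lambda>v. v \<in> cell j y" w] w by (auto simp: cell_def)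
    then show ?thesis using w unfolding E_assessment_def gain_def cell_def by simp
  qed
  then show ?thesis using wge g0 g1 g2 unfolding sum_lessThan_3 by (simp add: numeral_2_eq_2 algebra_simps)
qed

lemma Efun_coherent:
  assumes y: "y \<in> st M j"
  shows "coherent_lp (cell j y) (Efun M j y)"
proof -
  have "Efun M j y = (\<lambda>f. Inf ((\<lambda>P. P f) ` ((\<lambda>E. E y) ` {E. ine_cand M j (Pk M (Suc j)) E})))"
    by (rule ext) (simp add: Efun_step[OF level(2)] image_image)
  then show ?thesis
    using prod_env_ine_cand y by (simp only:) (intro coherent_lp_Inf; auto simp: ine_cand_iff cell_def)
qed

lemma prod_env_le_atom_prev:
  assumes y: "y \<in> st M j" and o: "o' \<in> out M j"
  shows "prod_env y (\<lambda>w. indicator {o'} (hd (snd w)) * g (tl (fst w), tl (snd w))) \<le> atom_prev (Sm M j y) o' (Pk M (Suc j) y g)"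
proof -
  let ?c = "Pk M (Suc j) y g"
  obtain p where p: "p \<in> dom_P y" "lin_prev (Omega M (Suc j)) p g = ?c" using dom_P_attaining[OF y] by blast
  show ?thesis
  proof (cases "0 \<le> ?c")
    case True
    obtain s where s: "s \<in> dom_S y" "lin_prev (out M j) s (indicator {o'}) = Sm M j y (indicator {o'})"
      using dom_S_attaining[OF y] by blast
    have "s o' = Sm M j y (indicator {o'})" using s(2) lin_prev_indicator[OF finite_out_level o] by simp
    then show ?thesis using prod_env_le[OF y s(1) p(1), of "\<lambda>w. indicator {o'} (hd (snd w)) * g (tl (fst w), tl (snd w))"] prod_prev_indicator_mult[OF y s(1) p(1) o, of g] p(2) True
      unfolding atom_prev_def by (simp add: mult.commute)
  next
    case False
    obtain s where s: "s \<in> dom_S y" "lin_prev (out M j) s (\<lambda>x. - indicator {o'} x) = Sm M j y (\<lambda>x. - indicator {o'} x)"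
      using dom_S_attaining[OF y] by blast
    have "s o' = upper (Sm M j y) (indicator {o'})" using s(2) lin_prev_neg_indicator[OF finite_out_level o] unfolding upper_def by simp
    then show ?thesis using prod_env_le[OF y s(1) p(1), of "\<lambda>w. indicator {o'} (hd (snd w)) * g (tl (fst w), tl (snd w))"] prod_prev_indicator_mult[OF y s(1) p(1) o, of g] p(2) False
      unfolding atom_prev_def by (simp add: mult.commute)
  qed
qed

text \<open>The factorisation property: on a product gamble in the cell of \<open>y\<close>, the natural extension
  is attained by the product envelope and bounded below by every candidate.\<close>

lemma Efun_product:
  assumes y: "y \<in> st M j" and o: "o' \<in> out M j"
  shows "Efun M j y (\<lambda>w. indicator {o'} (hd (snd w)) * g (tl (fst w), tl (snd w)))
           = atom_prev (Sm M j y) o' (Pk M (Suc j) y g)"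
proof -
  let ?F = "\<lambda>w. indicator {o'} (hd (snd w)) * g (tl (fst w), tl (snd w))"
  let ?V = "(\<lambda>E. E y ?F) ` {E. ine_cand M j (Pk M (Suc j)) E}"
  have lb: "atom_prev (Sm M j y) o' (Pk M (Suc j) y g) \<le> v" if "v \<in> ?V" for v
    using that ine_cand_ge_atom_prev[OF _ y o] by blast
  have "prod_env y ?F \<in> ?V" using prod_env_ine_cand by blast
  then have "Inf ?V \<le> prod_env y ?F" by (rule cInf_lower) (use lb in \<open>auto simp: bdd_below_def\<close>)
  moreover have "atom_prev (Sm M j y) o' (Pk M (Suc j) y g) \<le> Inf ?V"
    using \<open>prod_env y ?F \<in> ?V\<close> lb by (intro cInf_greatest) auto
  ultimately show ?thesis
    unfolding Efun_step[OF level(2)] using prod_env_le_atom_prev[OF y o, of g] by linarith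
qed

lemma E_regular_step: "E_regular j"
  unfolding E_regular_def
proof (intro conjI ballI)
  fix y assume y: "y \<in> st M j"
  show "coherent_lp (cell j y) (Efun M j y)" using Efun_coherent[OF y] .
  fix v assume v: "v \<in> cell j y"
  then have v\<Omega>: "v \<in> Omega M j" and vy: "hd (fst v) = y" unfolding cell_def by auto
  have vs: "hd (snd v) \<in> out M j" "(tl (fst v), tl (snd v)) \<in> Omega M (Suc j)" "fst v \<noteq> []" "snd v \<noteq> []"
    using v\<Omega> Omega_iff_hd_tl[OF level(2)] by auto
  let ?u = "hd (snd v)" and ?ab = "(tl (fst v), tl (snd v))"
  let ?F = "\<lambda>w. indicator {?u} (hd (snd w)) * (\<lambda>x. - indicator {?ab} x) (tl (fst w), tl (snd w))"
  have eqc: "- indicator {v} w = (?F w :: real)" if "w \<in> cell j y" for w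
  proof -
    have w: "fst w \<noteq> []" "snd w \<noteq> []" "hd (fst w) = y" using that Omega_iff_hd_tl[OF level(2)] unfolding cell_def by auto
    have "w = v \<longleftrightarrow> hd (snd w) = ?u \<and> (tl (fst w), tl (snd w)) = ?ab"
      using w vs vy by (cases w, cases v) (auto simp: list_eq_iff_nth_eq[of "fst _"] intro: list.expand)
    then show ?thesis by (auto simp: indicator_def)
  qed
  have "Efun M j y (\<lambda>w. - indicator {v} w) = Efun M j y ?F"
    by (rule coherent_lp_cong[OF Efun_coherent[OF y] cell_nonempty[OF level(1) less_imp_le[OF level(2)] y]]) (use eqc in auto)
  also have "\<dots> = atom_prev (Sm M j y) ?u (Pk M (Suc j) y (\<lambda>x. - indicator {?ab} x))"
    by (rule Efun_product[OF y vs(1)])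
  finally have e: "Efun M j y (\<lambda>w. - indicator {v} w) = atom_prev (Sm M j y) ?u (Pk M (Suc j) y (\<lambda>x. - indicator {?ab} x))" .
  have c: "Pk M (Suc j) y (\<lambda>x. - indicator {?ab} x) < 0" using P_next_neg_indicator[OF y vs(2)] .
  have u: "upper (Sm M j y) (indicator {?u}) > 0" using S_upper_pos[OF level(1) less_imp_le[OF level(2)] y vs(1)] .
  show "Efun M j y (\<lambda>w. - indicator {v} w) < 0" unfolding e atom_prev_def using c u by (simp add: mult_neg_pos)
qed

end

context positive_ihmm
begin

lemma E_regular_all: "1 \<le> j \<Longrightarrow> j \<le> n \<Longrightarrow> E_regular j"
proof (induction "n - j" arbitrary: j)
  case 0
  then have "j = n" by simp
  then show ?case using E_regular_last by simp
next
  case (Suc d)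
  then have j: "j < n" by simp
  have d: "d = n - Suc j" using Suc.hyps(2) by simp
  have regular_next: "E_regular (Suc j)" using Suc.hyps(1)[OF d] j by simp
  interpret l: ihmm_level M ob j using Suc.prems j regular_next by unfold_locales auto
  show ?case by (rule l.E_regular_step)
qed

end

section \<open>The joint models on observation indicators\<close>

lemma indicator_Cons:
  "l \<noteq> [] \<Longrightarrow> (indicator {c # cs} l :: real) = indicator {c} (hd l) * indicator {cs} (tl l)"
  by (cases l) (auto simp: indicator_def)

context positive_ihmm
begin

definition path_prod :: "(nat \<Rightarrow> 'x \<Rightarrow> real) \<Rightarrow> (nat \<Rightarrow> 'x \<Rightarrow> 'x \<Rightarrow> real) \<Rightarrow> nat \<Rightarrow> 'x list \<Rightarrow> real" where
  "path_prod a b j zs = a j (zs ! 0) * (\<Prod>i\<in>{Suc j..n}. a i (zs ! (i - j)) * b i (zs ! (i - j - 1)) (zs ! (i - j)))"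

abbreviation "S_up \<equiv> (\<lambda>i x. upper (Sm M i x) (indicator {ob i}))"
abbreviation "Q_up \<equiv> (\<lambda>i x y. upper (Qm M i x) (indicator {y}))"
abbreviation "S_lo \<equiv> (\<lambda>i x. Sm M i x (indicator {ob i}))"
abbreviation "Q_lo \<equiv> (\<lambda>i x y. Qm M i x (indicator {y}))"

lemma alpha_eq_path_prod: "alpha M ob j zs = path_prod S_up Q_up j zs"
  unfolding alpha_def path_prod_def by simp

lemma beta_eq_path_prod: "beta M ob j zs = path_prod S_lo Q_lo j zs"
  unfolding beta_def path_prod_def by simp

lemma path_prod_Cons:
  assumes j: "j < n"
  shows "path_prod a b j (x # xs) = a j x * b (Suc j) x (xs ! 0) * path_prod a b (Suc j) xs"
proof -
  have I: "{Suc j..n} = insert (Suc j) {Suc (Suc j)..n}" using j by auto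
  have "(\<Prod>i\<in>{Suc (Suc j)..n}. a i ((x # xs) ! (i - j)) * b i ((x # xs) ! (i - j - 1)) ((x # xs) ! (i - j)))
      = (\<Prod>i\<in>{Suc (Suc j)..n}. a i (xs ! (i - Suc j)) * b i (xs ! (i - Suc j - 1)) (xs ! (i - Suc j)))"
  proof (rule prod.cong[OF refl])
    fix i assume "i \<in> {Suc (Suc j)..n}"
    then have "i - j = Suc (i - Suc j)" "i - j - 1 = Suc (i - Suc j - 1)" by auto
    then show "a i ((x # xs) ! (i - j)) * b i ((x # xs) ! (i - j - 1)) ((x # xs) ! (i - j))
      = a i (xs ! (i - Suc j)) * b i (xs ! (i - Suc j - 1)) (xs ! (i - Suc j))" by simp
  qed
  then show ?thesis unfolding path_prod_def I by (simp add: mult_ac)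
qed

lemma alpha_Cons:
  "j < n \<Longrightarrow> xs \<noteq> [] \<Longrightarrow> alpha M ob j (x # xs) = S_up j x * Q_up (Suc j) x (hd xs) * alpha M ob (Suc j) xs"
  unfolding alpha_eq_path_prod by (simp add: path_prod_Cons hd_conv_nth)

lemma beta_Cons:
  "j < n \<Longrightarrow> xs \<noteq> [] \<Longrightarrow> beta M ob j (x # xs) = S_lo j x * Q_lo (Suc j) x (hd xs) * beta M ob (Suc j) xs"
  unfolding beta_eq_path_prod by (simp add: path_prod_Cons hd_conv_nth)

lemma path_prod_last: "path_prod a b n [x] = a n x"
  unfolding path_prod_def by simp

lemma xseq_nth: "xs \<in> xseq M j \<Longrightarrow> l < length xs \<Longrightarrow> xs ! l \<in> st M (j + l)"
  unfolding xseq_def by blast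

lemma path_prod_factors:
  assumes j: "1 \<le> j" "j \<le> n" and zs: "zs \<in> xseq M j"
  shows "zs ! 0 \<in> st M j"
    and "\<And>i. i \<in> {Suc j..n} \<Longrightarrow> zs ! (i - j) \<in> st M i \<and> zs ! (i - j - 1) \<in> st M (i - 1)"
proof -
  have len: "length zs = Suc n - j" using length_xseq[OF zs] .
  show "zs ! 0 \<in> st M j" using xseq_nth[OF zs, of 0] len j by simp
  fix i assume i: "i \<in> {Suc j..n}"
  then have "j + (i - j) = i" "j + (i - j - 1) = i - 1" "i - j < length zs" "i - j - 1 < length zs"
    using len by auto
  then show "zs ! (i - j) \<in> st M i \<and> zs ! (i - j - 1) \<in> st M (i - 1)"
    using xseq_nth[OF zs, of "i - j"] xseq_nth[OF zs, of "i - j - 1"] by simp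
qed

lemma path_prod_pos:
  assumes j: "1 \<le> j" "j \<le> n" and zs: "zs \<in> xseq M j"
    and a: "\<And>i x. 1 \<le> i \<Longrightarrow> i \<le> n \<Longrightarrow> x \<in> st M i \<Longrightarrow> 0 < a i x"
    and b: "\<And>i x y. 1 \<le> i \<Longrightarrow> i \<le> n \<Longrightarrow> x \<in> st M (i - 1) \<Longrightarrow> y \<in> st M i \<Longrightarrow> 0 < b i x y"
  shows "0 < path_prod a b j zs"
  unfolding path_prod_def using path_prod_factors[OF j zs] a b j
  by (intro mult_pos_pos prod_pos) auto

lemma path_prod_nonneg:
  assumes j: "1 \<le> j" "j \<le> n" and zs: "zs \<in> xseq M j"
    and a: "\<And>i x. 1 \<le> i \<Longrightarrow> i \<le> n \<Longrightarrow> x \<in> st M i \<Longrightarrow> 0 \<le> a i x"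
    and b: "\<And>i x y. 1 \<le> i \<Longrightarrow> i \<le> n \<Longrightarrow> x \<in> st M (i - 1) \<Longrightarrow> y \<in> st M i \<Longrightarrow> 0 \<le> b i x y"
  shows "0 \<le> path_prod a b j zs"
  unfolding path_prod_def using path_prod_factors[OF j zs] a b j
  by (intro mult_nonneg_nonneg prod_nonneg) auto

lemma alpha_pos: "1 \<le> j \<Longrightarrow> j \<le> n \<Longrightarrow> zs \<in> xseq M j \<Longrightarrow> 0 < alpha M ob j zs"
  unfolding alpha_eq_path_prod by (rule path_prod_pos) (auto intro!: S_upper_pos Q_upper_pos ob_in_out)

lemma beta_nonneg: "1 \<le> j \<Longrightarrow> j \<le> n \<Longrightarrow> zs \<in> xseq M j \<Longrightarrow> 0 \<le> beta M ob j zs"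
  unfolding beta_eq_path_prod
  by (rule path_prod_nonneg)
    (auto intro!: coherent_lp_nonneg[OF S_coherent] coherent_lp_nonneg[OF Q_coherent] simp: out_nonempty st_nonempty)

lemma ovec_Cons: "j \<le> n \<Longrightarrow> ovec M ob j = ob j # ovec M ob (Suc j)"
  unfolding ovec_def by (cases "j = n") (auto simp: upt_conv_Cons)

lemma ovec_last: "ovec M ob n = [ob n]"
  unfolding ovec_def by simp

definition obs_indicator :: "nat \<Rightarrow> 'x list \<Rightarrow> 'x list \<times> 'o list \<Rightarrow> real" where
  "obs_indicator j xs w = indicator {ovec M ob j} (snd w) * indicator {xs} (fst w)"

lemma Pk_concentrated:
  assumes i: "1 \<le> i" "i \<le> n" and z: "z \<in> st M (i - 1)"
    and E: "\<And>y. y \<in> st M i \<Longrightarrow> Efun M i y f = c * indicator {x} y"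
  shows "Pk M i z f = atom_prev (Qm M i z) x c"
proof -
  have "Pk M i z f = Qm M i z (\<lambda>y. c * indicator {x} y)"
    unfolding Pk_def using E by (intro coherent_lp_cong[OF Q_coherent[OF i z] st_nonempty[OF i]]) auto
  then show ?thesis using coherent_lp_scaled_indicator[OF Q_coherent[OF i z]] by simp
qed

lemma Efun_obs_indicator_last:
  assumes "[x] \<in> xseq M n" "y \<in> st M n"
  shows "Efun M n y (obs_indicator n [x]) = beta M ob n [x] * indicator {x} y"
    and "Efun M n y (\<lambda>w. - obs_indicator n [x] w) = - alpha M ob n [x] * indicator {x} y"
proof -
  have S: "coherent_lp (out M n) (Sm M n y)" using S_coherent[OF n_pos le_refl assms(2)] .
  have "(\<lambda>u. indicator {[ob n]} [u] :: real) = indicator {ob n}" by (auto simp: indicator_def)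
  then show "Efun M n y (obs_indicator n [x]) = beta M ob n [x] * indicator {x} y"
    "Efun M n y (\<lambda>w. - obs_indicator n [x] w) = - alpha M ob n [x] * indicator {x} y"
    unfolding beta_eq_path_prod alpha_eq_path_prod path_prod_last
    by (auto simp: Efun_last obs_indicator_def ovec_last coherent_lp_zero[OF S] upper_def indicator_def)
qed

end

context ihmm_level
begin

lemma Efun_scaled_obs_indicator_Cons:
  assumes y: "y \<in> st M j"
  shows "Efun M j y (\<lambda>w. c * obs_indicator j (x # xs) w)
     = atom_prev (Sm M j y) (ob j) (Pk M (Suc j) y (\<lambda>v. c * obs_indicator (Suc j) xs v)) * indicator {x} y"
proof -
  have jn: "1 \<le> j" "j \<le> n" using level by auto
  have cell: "fst w \<noteq> [] \<and> snd w \<noteq> [] \<and> hd (fst w) = y" if "w \<in> cell j y" for w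
    using that Omega_iff_hd_tl[OF level(2)] unfolding cell_def by auto
  show ?thesis
  proof (cases "x = y")
    case True
    define g where "g v = c * obs_indicator (Suc j) xs v" for v
    have "Efun M j y (\<lambda>w. c * obs_indicator j (x # xs) w)
        = Efun M j y (\<lambda>w. indicator {ob j} (hd (snd w)) * g (tl (fst w), tl (snd w)))"
      using cell True
      by (auto intro!: coherent_lp_cong[OF Efun_coherent[OF y] cell_nonempty[OF jn y]]
          simp: obs_indicator_def indicator_Cons ovec_Cons[OF jn(2)] g_def)
    then show ?thesis using True Efun_product[OF y ob_in_out[OF jn], of g] by (simp add: g_def[abs_def])
  next
    case False
    then show ?thesis
      using cell by (auto intro!: Efun_zero_on_cell[OF jn E_regular_step y] simp: obs_indicator_def indicator_Cons)
  qed
qed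

lemma Efun_obs_indicator_Cons:
  assumes x: "x \<in> st M j" and xs: "xs \<in> xseq M (Suc j)" and y: "y \<in> st M j"
    and next_beta: "\<And>y'. y' \<in> st M (Suc j) \<Longrightarrow>
      Efun M (Suc j) y' (obs_indicator (Suc j) xs) = beta M ob (Suc j) xs * indicator {hd xs} y'"
    and next_alpha: "\<And>y'. y' \<in> st M (Suc j) \<Longrightarrow>
      Efun M (Suc j) y' (\<lambda>w. - obs_indicator (Suc j) xs w) = - alpha M ob (Suc j) xs * indicator {hd xs} y'"
  shows "Efun M j y (obs_indicator j (x # xs)) = beta M ob j (x # xs) * indicator {x} y"
    and "Efun M j y (\<lambda>w. - obs_indicator j (x # xs) w) = - alpha M ob j (x # xs) * indicator {x} y"
proof -
  have xs_ne: "xs \<noteq> []" using xseq_not_Nil[OF xs] level by simp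
  have Qup: "0 < Q_up (Suc j) y (hd xs)" if "x = y"
    using Q_upper_pos[OF next_level, of y "hd xs"] that x xseq_nth[OF xs, of 0] xs_ne by (auto simp: hd_conv_nth)
  have Pb: "Pk M (Suc j) y (obs_indicator (Suc j) xs) = Q_lo (Suc j) y (hd xs) * beta M ob (Suc j) xs" if "x = y"
    using Pk_concentrated[OF next_level _ next_beta] that x beta_nonneg[OF next_level xs]
    by (simp add: atom_prev_def mult.commute)
  have Pa: "Pk M (Suc j) y (\<lambda>w. - obs_indicator (Suc j) xs w) = - Q_up (Suc j) y (hd xs) * alpha M ob (Suc j) xs"
    if "x = y"
    using Pk_concentrated[OF next_level _ next_alpha] that x alpha_pos[OF next_level xs]
    by (simp add: atom_prev_def mult.commute)
  have Qlo: "0 \<le> Q_lo (Suc j) y (hd xs)" if "x = y"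
    using coherent_lp_nonneg[OF Q_coherent[OF next_level] st_nonempty[OF next_level], of y "indicator {hd xs}"]
      that x by (auto simp: indicator_def)
  show "Efun M j y (obs_indicator j (x # xs)) = beta M ob j (x # xs) * indicator {x} y"
  proof (cases "x = y")
    case True
    then show ?thesis using Efun_scaled_obs_indicator_Cons[OF y, of 1 x xs] Pb Qlo beta_Cons[OF level(2) xs_ne, of x]
      beta_nonneg[OF next_level xs] by (simp add: atom_prev_def mult_ac)
  qed (use Efun_scaled_obs_indicator_Cons[OF y, of 1 x xs] in simp)
  show "Efun M j y (\<lambda>w. - obs_indicator j (x # xs) w) = - alpha M ob j (x # xs) * indicator {x} y"
  proof (cases "x = y")
    case True
    then show ?thesis using Efun_scaled_obs_indicator_Cons[OF y, of "-1" x xs] Pa alpha_Cons[OF level(2) xs_ne, of x]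
      mult_pos_pos[OF Qup alpha_pos[OF next_level xs]] by (simp add: atom_prev_def mult_ac)
  qed (use Efun_scaled_obs_indicator_Cons[OF y, of "-1" x xs] in simp)
qed

end

context positive_ihmm
begin

lemma Efun_obs_indicator:
  assumes "1 \<le> j" "j \<le> n" "xs \<in> xseq M j" "y \<in> st M j"
  shows "Efun M j y (obs_indicator j xs) = beta M ob j xs * indicator {hd xs} y
     \<and> Efun M j y (\<lambda>w. - obs_indicator j xs w) = - alpha M ob j xs * indicator {hd xs} y"
  using assms
proof (induction "n - j" arbitrary: j xs y)
  case 0
  then obtain x where "xs = [x]" "[x] \<in> xseq M n" using xseq_last by auto
  then show ?case using Efun_obs_indicator_last 0 by simp
next
  case (Suc d)
  then have j: "j < n" by simp
  obtain x xs' where xs: "xs = x # xs'" using xseq_not_Nil[OF Suc.prems(3)] Suc.prems by (cases xs) auto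
  have x: "x \<in> st M j" and xs': "xs' \<in> xseq M (Suc j)" using Suc.prems(3) xseq_Cons[OF j] xs by auto
  interpret ihmm_level M ob j using Suc.prems j E_regular_all[of "Suc j"] by unfold_locales auto
  show ?case
    using Efun_obs_indicator_Cons[OF x xs' Suc.prems(4)] Suc.hyps(1)[of "Suc j" xs'] Suc.hyps(2) j xs'
    unfolding xs by simp
qed

end

section \<open>The threshold \<open>\<tau>\<close>\<close>

definition threshold_set :: "(('a \<Rightarrow> real) \<Rightarrow> real) \<Rightarrow> 'a \<Rightarrow> 'a \<Rightarrow> real set" where
  "threshold_set Q x xh = {t. 0 \<le> t \<and> Q (\<lambda>y. indicator {x} y - t * indicator {xh} y) \<le> 0}"

lemma tau_eq_threshold: "tau M k z x xh = Inf (threshold_set (Qm M k z) x xh)"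
  unfolding tau_def threshold_set_def ..

context
  fixes A :: "'a set" and Q :: "('a \<Rightarrow> real) \<Rightarrow> real" and x xh :: 'a
  assumes Q: "coherent_lp A Q" "A \<noteq> {}" and U: "upper Q (indicator {xh}) > 0"
begin

lemma threshold_set_nonempty: "1 / upper Q (indicator {xh}) \<in> threshold_set Q x xh"
proof -
  let ?u = "upper Q (indicator {xh})"
  have "Q (\<lambda>y. - (1 / ?u) * indicator {xh} y + indicator {x} y)
      \<le> Q (\<lambda>y. - (1 / ?u) * indicator {xh} y) + upper Q (indicator {x})"
    by (rule coherent_lp_add_le_upper[OF Q(1)])
  also have "\<dots> = - 1 + upper Q (indicator {x})"
    using coherent_lp_scale_nonpos[OF Q(1), of "- (1 / ?u)" "indicator {xh}"] U by simp
  also have "upper Q (indicator {x}) \<le> 1" by (rule upper_le_const[OF Q]) (auto simp: indicator_def)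
  finally show ?thesis unfolding threshold_set_def using U by (simp add: add.commute)
qed

lemma threshold_set_upward:
  assumes "t \<in> threshold_set Q x xh" "t \<le> t'"
  shows "t' \<in> threshold_set Q x xh"
proof -
  have "Q (\<lambda>y. indicator {x} y - t' * indicator {xh} y) \<le> Q (\<lambda>y. indicator {x} y - t * indicator {xh} y)"
    using assms(2) by (intro coherent_lp_mono[OF Q]) (simp add: indicator_def)
  then show ?thesis using assms unfolding threshold_set_def by simp
qed

lemma threshold_nonneg: "0 \<le> Inf (threshold_set Q x xh)"
proof (rule cInf_greatest)
  show "threshold_set Q x xh \<noteq> {}" using threshold_set_nonempty by blast
qed (simp add: threshold_set_def)

lemma threshold_in_set: "Inf (threshold_set Q x xh) \<in> threshold_set Q x xh"
proof (rule ccontr)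
  let ?\<tau> = "Inf (threshold_set Q x xh)" and ?u = "upper Q (indicator {xh})"
  have bdd: "bdd_below (threshold_set Q x xh)" unfolding threshold_set_def by (auto simp: bdd_below_def)
  assume "?\<tau> \<notin> threshold_set Q x xh"
  define d where "d = Q (\<lambda>y. indicator {x} y - ?\<tau> * indicator {xh} y)"
  have d: "d > 0" using \<open>?\<tau> \<notin> threshold_set Q x xh\<close> threshold_nonneg unfolding threshold_set_def d_def by auto
  obtain t where t: "t \<in> threshold_set Q x xh" "t < ?\<tau> + d"
    using cInf_lessD[of "threshold_set Q x xh" "?\<tau> + d"] threshold_set_nonempty d by auto
  have tt: "?\<tau> \<le> t" using cInf_lower[OF t(1) bdd] .
  \<comment> \<open>moving from \<open>t\<close> down to \<open>\<tau>\<close> raises \<open>Q\<close> by at most \<open>(t - \<tau>) \<cdot> u \<le> t - \<tau> < d\<close>\<close>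
  have "d \<le> Q (\<lambda>y. indicator {x} y - t * indicator {xh} y) + upper Q (\<lambda>y. (t - ?\<tau>) * indicator {xh} y)"
    using coherent_lp_add_le_upper[OF Q(1), of "\<lambda>y. indicator {x} y - t * indicator {xh} y" "\<lambda>y. (t - ?\<tau>) * indicator {xh} y"]
    unfolding d_def by (simp add: algebra_simps)
  also have "upper Q (\<lambda>y. (t - ?\<tau>) * indicator {xh} y) = (t - ?\<tau>) * ?u"
    using upper_scale_nonneg[OF Q(1), of "t - ?\<tau>"] tt by simp
  also have "Q (\<lambda>y. indicator {x} y - t * indicator {xh} y) \<le> 0" using t(1) unfolding threshold_set_def by simp
  also have "?u \<le> 1" by (rule upper_le_const[OF Q]) (auto simp: indicator_def)
  then have "(t - ?\<tau>) * ?u \<le> t - ?\<tau>" using tt by (simp add: mult_left_le)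
  finally show False using t(2) by simp
qed

lemma threshold_iff:
  assumes b: "0 \<le> b" and a: "0 \<le> a"
  shows "Q (\<lambda>y. b * indicator {x} y - a * indicator {xh} y) \<le> 0 \<longleftrightarrow> b * Inf (threshold_set Q x xh) \<le> a"
proof (cases "b = 0")
  case True
  have "Q (\<lambda>y. - a * indicator {xh} y) = - a * upper Q (indicator {xh})"
    using coherent_lp_scale_nonpos[OF Q(1), of "- a" "indicator {xh}"] a by simp
  then show ?thesis using True U a by (simp add: mult_nonneg_nonneg)
next
  case False
  then have bp: "b > 0" using b by simp
  have bdd: "bdd_below (threshold_set Q x xh)" unfolding threshold_set_def by (auto simp: bdd_below_def)
  have "(\<lambda>y. b * indicator {x} y - a * indicator {xh} y) = (\<lambda>y. b * (indicator {x} y - (a / b) * indicator {xh} y))"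
    using bp by (auto simp: fun_eq_iff algebra_simps)
  then have "Q (\<lambda>y. b * indicator {x} y - a * indicator {xh} y) \<le> 0
      \<longleftrightarrow> Q (\<lambda>y. indicator {x} y - (a / b) * indicator {xh} y) \<le> 0"
    using coherent_lp_scale_nonneg[OF Q(1) b] bp by (simp add: mult_le_0_iff)
  also have "\<dots> \<longleftrightarrow> a / b \<in> threshold_set Q x xh" unfolding threshold_set_def using a bp by simp
  also have "\<dots> \<longleftrightarrow> Inf (threshold_set Q x xh) \<le> a / b"
    using threshold_set_upward[OF threshold_in_set, of "a / b"] cInf_lower[OF _ bdd, of "a / b"] by blast
  also have "\<dots> \<longleftrightarrow> b * Inf (threshold_set Q x xh) \<le> a" using bp by (simp add: pos_le_divide_eq mult.commute)
  finally show ?thesis .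
qed

end

lemma Max_mult_le_iff:
  fixes S :: "real set"
  assumes "finite S" "S \<noteq> {}" "0 \<le> t"
  shows "Max S * t \<le> a \<longleftrightarrow> (\<forall>s\<in>S. s * t \<le> a)"
proof
  assume "Max S * t \<le> a"
  then show "\<forall>s\<in>S. s * t \<le> a"
    using assms by (meson Max_ge mult_right_mono order_trans)
next
  assume "\<forall>s\<in>S. s * t \<le> a"
  then show "Max S * t \<le> a" using Max_in[OF assms(1,2)] by blast
qed

section \<open>Characterisation of the optimal sequences\<close>

lemma atom_prev_nonpos_iff:
  assumes "0 \<le> S (indicator {o'})" "0 < upper S (indicator {o'})"
  shows "atom_prev S o' c \<le> 0 \<longleftrightarrow> c \<le> 0 \<or> S (indicator {o'}) = 0"
  using assms unfolding atom_prev_def by (auto simp: mult_le_0_iff)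

context positive_ihmm
begin

definition opt_gamble :: "nat \<Rightarrow> 'x list \<Rightarrow> 'x list \<Rightarrow> 'x list \<times> 'o list \<Rightarrow> real" where
  "opt_gamble i x xh w = indicator {ovec M ob i} (snd w) * (indicator {x} (fst w) - indicator {xh} (fst w))"

lemma opt_iff_opt_gamble: "opt M ob i z = {xh \<in> xseq M i. \<forall>x \<in> xseq M i. Pk M i z (opt_gamble i x xh) \<le> 0}"
  unfolding opt_def opt_gamble_def[abs_def] by simp

lemma hd_xseq: "x \<in> xseq M j \<Longrightarrow> j \<le> n \<Longrightarrow> hd x \<in> st M j"
  using xseq_not_Nil[of x j] xseq_nth[of x j 0] by (simp add: hd_conv_nth)

end

context ihmm_level
begin

lemma Efun_opt_gamble_hd_neq:
  assumes x: "x \<in> xseq M j" and xh: "xh \<in> xseq M j" and ne: "hd x \<noteq> hd xh" and y: "y \<in> st M j"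
  shows "Efun M j y (opt_gamble j x xh) = beta M ob j x * indicator {hd x} y - alpha M ob j xh * indicator {hd xh} y"
proof -
  have jn: "1 \<le> j" "j \<le> n" using level by auto
  have "Efun M j y (opt_gamble j x xh)
      = Efun M j y (\<lambda>w. indicator {hd x} y * obs_indicator j x w - indicator {hd xh} y * obs_indicator j xh w)"
    using ne by (intro coherent_lp_cong[OF Efun_coherent[OF y] cell_nonempty[OF jn y]])
      (auto simp: opt_gamble_def obs_indicator_def indicator_def cell_def)
  also have "\<dots> = beta M ob j x * indicator {hd x} y - alpha M ob j xh * indicator {hd xh} y"
    using Efun_obs_indicator[OF jn x y] Efun_obs_indicator[OF jn xh y] ne Efun_zero_on_cell[OF jn E_regular_step y]
    by (cases "hd x = y"; cases "hd xh = y") (auto simp: indicator_def)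
  finally show ?thesis .
qed

lemma Efun_opt_gamble_hd_eq:
  assumes y0: "y0 \<in> st M j" and y: "y \<in> st M j"
  shows "Efun M j y (opt_gamble j (y0 # x') (y0 # xh'))
      = atom_prev (Sm M j y0) (ob j) (Pk M (Suc j) y0 (opt_gamble (Suc j) x' xh')) * indicator {y0} y"
proof -
  have jn: "1 \<le> j" "j \<le> n" using level by auto
  have cell: "fst w \<noteq> [] \<and> snd w \<noteq> [] \<and> hd (fst w) = y" if "w \<in> cell j y" for w
    using that Omega_iff_hd_tl[OF level(2)] unfolding cell_def by auto
  show ?thesis
  proof (cases "y = y0")
    case True
    have "Efun M j y (opt_gamble j (y0 # x') (y0 # xh'))
        = Efun M j y (\<lambda>w. indicator {ob j} (hd (snd w)) * opt_gamble (Suc j) x' xh' (tl (fst w), tl (snd w)))"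
      using cell True by (intro coherent_lp_cong[OF Efun_coherent[OF y] cell_nonempty[OF jn y]])
        (auto simp: opt_gamble_def indicator_Cons ovec_Cons[OF jn(2)] algebra_simps)
    then show ?thesis using Efun_product[OF y ob_in_out[OF jn]] True by simp
  next
    case False
    then show ?thesis
      by (auto intro!: Efun_zero_on_cell[OF jn E_regular_step y] simp: opt_gamble_def indicator_def cell_def)
  qed
qed

end

locale ihmm_level_given = ihmm_level M ob j for M :: "('x, 'o) ihmm" and ob :: "nat \<Rightarrow> 'o" and j :: nat +
  fixes z :: 'x
  assumes z: "z \<in> st M (j - 1)"
begin

lemma level_le: "1 \<le> j" "j \<le> n" using level by auto

lemma Q_given_coherent: "coherent_lp (st M j) (Qm M j z)" using Q_coherent[OF level_le z] .

lemma Pk_opt_gamble_hd_neq: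
  assumes x: "x \<in> xseq M j" and xh: "xh \<in> xseq M j" and ne: "hd x \<noteq> hd xh"
  shows "Pk M j z (opt_gamble j x xh)
      = Qm M j z (\<lambda>y. beta M ob j x * indicator {hd x} y - alpha M ob j xh * indicator {hd xh} y)"
  unfolding Pk_def[of M j z] using Efun_opt_gamble_hd_neq[OF x xh ne]
  by (intro coherent_lp_cong[OF Q_given_coherent st_nonempty[OF level_le]]) simp

lemma opt_gamble_hd_neq_iff:
  assumes xh: "xh \<in> xseq M j"
  shows "(\<forall>x\<in>xseq M j. hd x \<noteq> hd xh \<longrightarrow> Pk M j z (opt_gamble j x xh) \<le> 0)
     \<longleftrightarrow> aopt1 M ob j z (hd xh) \<le> alpha M ob j xh"
proof -
  let ?y0 = "hd xh" and ?a = "alpha M ob j xh"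
  have y0: "?y0 \<in> st M j" using hd_xseq[OF xh level_le(2)] .
  have apos: "0 < ?a" using alpha_pos[OF level_le xh] .
  have U: "upper (Qm M j z) (indicator {?y0}) > 0" using Q_upper_pos[OF level_le z y0] .
  note thr = threshold_nonneg[OF Q_given_coherent st_nonempty[OF level_le] U]
    threshold_iff[OF Q_given_coherent st_nonempty[OF level_le] U]
  have test: "Pk M j z (opt_gamble j x xh) \<le> 0 \<longleftrightarrow> beta M ob j x * tau M j z (hd x) ?y0 \<le> ?a"
    if x: "x \<in> xseq M j" and ne: "hd x \<noteq> ?y0" for x
    unfolding Pk_opt_gamble_hd_neq[OF x xh ne] tau_eq_threshold
    using thr beta_nonneg[OF level_le x] apos by simp
  define Bs where "Bs y = {beta M ob j zs | zs. zs \<in> xseq M j \<and> hd zs = y}" for y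
  have "Bs y \<subseteq> beta M ob j ` xseq M j" for y unfolding Bs_def by auto
  then have Bfin: "finite (Bs y)" for y using finite_xseq[OF level_le(1)] finite_subset by blast
  have Bne: "Bs y \<noteq> {}" if "y \<in> st M j" for y
    using xseq_Cons_ex[OF level_le that] unfolding Bs_def by fastforce
  have "(\<forall>x\<in>xseq M j. hd x \<noteq> ?y0 \<longrightarrow> Pk M j z (opt_gamble j x xh) \<le> 0)
      \<longleftrightarrow> (\<forall>y\<in>st M j. y \<noteq> ?y0 \<longrightarrow> (\<forall>s\<in>Bs y. s * tau M j z y ?y0 \<le> ?a))"
    using test hd_xseq[OF _ level_le(2)] unfolding Bs_def by blast
  also have "\<dots> \<longleftrightarrow> (\<forall>y\<in>st M j. y \<noteq> ?y0 \<longrightarrow> bmax M ob j y * tau M j z y ?y0 \<le> ?a)"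
    using Max_mult_le_iff[OF Bfin Bne] thr(1) unfolding bmax_def Bs_def tau_eq_threshold by auto
  also have "\<dots> \<longleftrightarrow> aopt1 M ob j z ?y0 \<le> ?a"
  proof -
    have "{bmax M ob j x * tau M j z x ?y0 | x. x \<in> st M j \<and> x \<noteq> ?y0} \<subseteq> (\<lambda>x. bmax M ob j x * tau M j z x ?y0) ` st M j"
      by auto
    then have "finite {bmax M ob j x * tau M j z x ?y0 | x. x \<in> st M j \<and> x \<noteq> ?y0}"
      using finite_st[OF level_le] finite_subset by blast
    then show ?thesis unfolding aopt1_def using apos by auto
  qed
  finally show ?thesis .
qed

lemma opt_gamble_hd_eq_iff:
  assumes y0: "y0 \<in> st M j" and xh': "xh' \<in> xseq M (Suc j)"
  shows "(\<forall>x'\<in>xseq M (Suc j). Pk M j z (opt_gamble j (y0 # x') (y0 # xh')) \<le> 0)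
     \<longleftrightarrow> y0 \<notin> Pos M ob j z \<or> xh' \<in> opt M ob (Suc j) y0"
proof -
  let ?S = "Sm M j y0 (indicator {ob j})" and ?Q = "Qm M j z (indicator {y0})"
  have S: "0 \<le> ?S" "0 < upper (Sm M j y0) (indicator {ob j})"
    using coherent_lp_nonneg[OF S_coherent[OF level_le y0] out_nonempty[OF level_le]]
      S_upper_pos[OF level_le y0 ob_in_out[OF level_le]] by (auto simp: indicator_def)
  have Q: "0 \<le> ?Q" "0 < upper (Qm M j z) (indicator {y0})"
    using coherent_lp_nonneg[OF Q_given_coherent st_nonempty[OF level_le]] Q_upper_pos[OF level_le z y0]
    by (auto simp: indicator_def)
  have "Pk M j z (opt_gamble j (y0 # x') (y0 # xh'))
      = atom_prev (Qm M j z) y0 (atom_prev (Sm M j y0) (ob j) (Pk M (Suc j) y0 (opt_gamble (Suc j) x' xh')))"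
    for x' using Pk_concentrated[OF level_le z Efun_opt_gamble_hd_eq[OF y0]] .
  then have "(\<forall>x'\<in>xseq M (Suc j). Pk M j z (opt_gamble j (y0 # x') (y0 # xh')) \<le> 0)
     \<longleftrightarrow> (\<forall>x'\<in>xseq M (Suc j). Pk M (Suc j) y0 (opt_gamble (Suc j) x' xh') \<le> 0 \<or> ?S = 0 \<or> ?Q = 0)"
    using atom_prev_nonpos_iff[OF S] atom_prev_nonpos_iff[OF Q] by auto
  also have "\<dots> \<longleftrightarrow> y0 \<notin> Pos M ob j z \<or> xh' \<in> opt M ob (Suc j) y0"
    unfolding opt_iff_opt_gamble Pos_def using xh' S(1) Q(1) y0 by auto
  finally show ?thesis .
qed

lemma opt_eq_Mog_filter: "opt M ob j z = {xh \<in> Mog M ob j z. aopt1 M ob j z (hd xh) \<le> alpha M ob j xh}"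
proof -
  have xseq_j: "x \<in> xseq M j \<longleftrightarrow> (\<exists>y x'. x = y # x' \<and> y \<in> st M j \<and> x' \<in> xseq M (Suc j))" for x
    using xseq_Cons[OF level(2)] xseq_not_Nil[of x j] level_le by (cases x) auto
  have Mog: "xh \<in> Mog M ob j z \<longleftrightarrow> (\<exists>y0 xh'. xh = y0 # xh' \<and> y0 \<in> st M j \<and> xh' \<in> xseq M (Suc j) \<and>
       (y0 \<notin> Pos M ob j z \<or> xh' \<in> opt M ob (Suc j) y0))" for xh
    unfolding Mog_def by (auto simp: Pos_def opt_def)
  have split: "(\<forall>x\<in>xseq M j. Pk M j z (opt_gamble j x (y0 # xh')) \<le> 0) \<longleftrightarrow>
      (\<forall>x'\<in>xseq M (Suc j). Pk M j z (opt_gamble j (y0 # x') (y0 # xh')) \<le> 0) \<and>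
      (\<forall>x\<in>xseq M j. hd x \<noteq> y0 \<longrightarrow> Pk M j z (opt_gamble j x (y0 # xh')) \<le> 0)" if "y0 \<in> st M j" for y0 xh'
    using that xseq_j xseq_Cons[OF level(2)] by (auto; metis list.sel(1))
  show ?thesis
  proof (intro set_eqI iffI)
    fix xh assume "xh \<in> opt M ob j z"
    then have xh: "xh \<in> xseq M j" and all: "\<forall>x\<in>xseq M j. Pk M j z (opt_gamble j x xh) \<le> 0"
      unfolding opt_iff_opt_gamble by auto
    obtain y0 xh' where e: "xh = y0 # xh'" and y0: "y0 \<in> st M j" and xh': "xh' \<in> xseq M (Suc j)"
      using xh xseq_j by blast
    show "xh \<in> {xh \<in> Mog M ob j z. aopt1 M ob j z (hd xh) \<le> alpha M ob j xh}"
      using opt_gamble_hd_eq_iff[OF y0 xh'] opt_gamble_hd_neq_iff[OF xh] split[OF y0] all e y0 xh'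
      unfolding Mog by auto
  next
    fix xh assume h: "xh \<in> {xh \<in> Mog M ob j z. aopt1 M ob j z (hd xh) \<le> alpha M ob j xh}"
    then obtain y0 xh' where e: "xh = y0 # xh'" and y0: "y0 \<in> st M j" and xh': "xh' \<in> xseq M (Suc j)"
      and c: "y0 \<notin> Pos M ob j z \<or> xh' \<in> opt M ob (Suc j) y0" unfolding Mog by blast
    have xh: "xh \<in> xseq M j" using e y0 xh' xseq_Cons[OF level(2)] by auto
    show "xh \<in> opt M ob j z"
      using opt_gamble_hd_eq_iff[OF y0 xh'] opt_gamble_hd_neq_iff[OF xh] split[OF y0] c h e xh
      unfolding opt_iff_opt_gamble by auto
  qed
qed

end

section \<open>The tree construction\<close>

context positive_ihmm
begin

context
  fixes j :: nat and z :: 'x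
  assumes j: "1 \<le> j" "j < n"
begin

text \<open>The product of the divisors of \<open>\<alpha>^opt_j(p_{j:j+l})\<close>; these are also the first factors of
  \<open>\<alpha>_j(p)\<close>.\<close>

definition divisor_prod :: "nat \<Rightarrow> 'x list \<Rightarrow> real" where
  "divisor_prod l p = (\<Prod>s\<in>{Suc j..j + l}. S_up (s - 1) (p ! (s - 1 - j)) * Q_up s (p ! (s - 1 - j)) (p ! (s - j)))"

lemma xseq_nth_le: "p \<in> xseq M j \<Longrightarrow> l \<le> n - j \<Longrightarrow> p ! l \<in> st M (j + l)"
  using xseq_nth[of p j l] length_xseq[of p j] j by simp

lemma divisor_prod_pos:
  assumes p: "p \<in> xseq M j" and l: "l \<le> n - j"
  shows "0 < divisor_prod l p"
  unfolding divisor_prod_def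
proof (rule prod_pos)
  fix s assume s: "s \<in> {Suc j..j + l}"
  have s1: "1 \<le> s" "s \<le> n" using s l j by auto
  have a: "p ! (s - 1 - j) \<in> st M (s - 1)" using xseq_nth_le[OF p, of "s - 1 - j"] s l by auto
  have b: "p ! (s - j) \<in> st M s" using xseq_nth_le[OF p, of "s - j"] s l by auto
  have s2: "1 \<le> s - 1" "s - 1 \<le> n" using s j l by auto
  show "0 < S_up (s - 1) (p ! (s - 1 - j)) * Q_up s (p ! (s - 1 - j)) (p ! (s - j))"
    using S_upper_pos[OF s2 a ob_in_out[OF s2]] Q_upper_pos[OF s1 a b] by simp
qed

lemma alpha_eq_divisor_prod:
  assumes p: "p \<in> xseq M j" and l: "l \<le> n - j"
  shows "alpha M ob j p = divisor_prod l p * alpha M ob (j + l) (drop l p)"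
  using l
proof (induction l)
  case 0
  then show ?case unfolding divisor_prod_def by simp
next
  case (Suc l)
  have lp: "Suc l < length p" using length_xseq[OF p] Suc.prems j by auto
  have dr: "drop l p = p ! l # drop (Suc l) p" using lp by (simp add: Cons_nth_drop_Suc)
  have dr0: "drop (Suc l) p ! 0 = p ! Suc l" using lp by simp
  have jl: "j + l < n" using Suc.prems j by auto
  have "alpha M ob (j + l) (drop l p) = S_up (j + l) (p ! l) * Q_up (Suc (j + l)) (p ! l) (p ! Suc l) * alpha M ob (Suc (j + l)) (drop (Suc l) p)"
    unfolding alpha_eq_path_prod dr path_prod_Cons[OF jl] dr0 ..
  moreover have "divisor_prod (Suc l) p = divisor_prod l p * (S_up (j + l) (p ! l) * Q_up (Suc (j + l)) (p ! l) (p ! Suc l))"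
  proof -
    have "divisor_prod (Suc l) p = divisor_prod l p * (S_up (Suc (j + l) - 1) (p ! (Suc (j + l) - 1 - j)) * Q_up (Suc (j + l)) (p ! (Suc (j + l) - 1 - j)) (p ! (Suc (j + l) - j)))"
      unfolding divisor_prod_def by simp
    moreover have "Suc (j + l) - 1 - j = l" "Suc (j + l) - j = Suc l" "Suc (j + l) - 1 = j + l" by auto
    ultimately show ?thesis by simp
  qed
  ultimately show ?case using Suc.IH Suc.prems by (simp add: mult_ac)
qed

lemma aopt_take:
  assumes p: "p \<in> xseq M j" and l: "l \<le> n - j"
  shows "aopt M ob j z (take (Suc l) p) = aopt1 M ob j z (hd p) / divisor_prod l p"
proof -
  have lp: "Suc l \<le> length p" using length_xseq[OF p] l j by auto
  have pne: "p \<noteq> []" using lp by auto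
  have len: "length (take (Suc l) p) = Suc l" using lp by simp
  have hd: "hd (take (Suc l) p) = hd p" using pne by (cases p) auto
  have iv: "{Suc j..<j + Suc l} = {Suc j..j + l}" by auto
  have "(\<Prod>s\<in>{Suc j..<j + length (take (Suc l) p)}.
        upper (Sm M (s - 1) (take (Suc l) p ! (s - 1 - j))) (indicator {ob (s - 1)}) *
        upper (Qm M s (take (Suc l) p ! (s - 1 - j))) (indicator {take (Suc l) p ! (s - j)})) = divisor_prod l p"
    unfolding len iv divisor_prod_def by (rule prod.cong) auto
  then show ?thesis unfolding aopt_def hd by simp
qed

lemma alpha_drop_le_amax:
  assumes p: "p \<in> xseq M j" and l: "l \<le> n - j"
  shows "alpha M ob (j + l) (drop l p) \<le> amax M ob (j + l) (p ! l)"
proof -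
  have lp: "l < length p" using length_xseq[OF p] l j by auto
  have dx: "drop l p \<in> xseq M (j + l)"
  proof -
    have "length (drop l p) = Suc n - (j + l)" using length_xseq[OF p] lp by simp
    moreover have "\<forall>i<length (drop l p). drop l p ! i \<in> st M (j + l + i)"
      using p unfolding xseq_def by (auto simp: add.assoc)
    ultimately show ?thesis unfolding xseq_def by simp
  qed
  have hd: "hd (drop l p) = p ! l" using lp by (simp add: hd_drop_conv_nth)
  have fin: "finite {alpha M ob (j + l) zs | zs. zs \<in> xseq M (j + l) \<and> hd zs = p ! l}"
  proof -
    have "{alpha M ob (j + l) zs | zs. zs \<in> xseq M (j + l) \<and> hd zs = p ! l} \<subseteq> alpha M ob (j + l) ` xseq M (j + l)" by auto
    then show ?thesis using finite_xseq[of "j + l"] j finite_subset by auto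
  qed
  show ?thesis unfolding amax_def using dx hd fin by (intro Max_ge) auto
qed

lemma amax_last:
  assumes p: "p \<in> xseq M j"
  shows "amax M ob n (p ! (n - j)) = alpha M ob n (drop (n - j) p)"
proof -
  have lp: "length p = Suc (n - j)" using length_xseq[OF p] j by auto
  have dr: "drop (n - j) p = [p ! (n - j)]"
  proof -
    have "n - j < length p" using lp by simp
    then have "drop (n - j) p = p ! (n - j) # drop (Suc (n - j)) p" by (rule Cons_nth_drop_Suc[symmetric])
    moreover have "drop (Suc (n - j)) p = []" using lp by simp
    ultimately show ?thesis by simp
  qed
  have x: "p ! (n - j) \<in> st M n" using xseq_nth_le[OF p, of "n - j"] j by simp
  have "{alpha M ob n zs | zs. zs \<in> xseq M n \<and> hd zs = p ! (n - j)} = {alpha M ob n [p ! (n - j)]}"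
    using x xseq_last by auto
  then show ?thesis unfolding amax_def dr by simp
qed

lemma prefix_tests_iff:
  assumes p: "p \<in> xseq M j"
  shows "(\<forall>l\<le>n - j. aopt M ob j z (take (Suc l) p) \<le> amax M ob (j + l) (p ! l)) \<longleftrightarrow> aopt1 M ob j z (hd p) \<le> alpha M ob j p"
proof
  assume h: "\<forall>l\<le>n - j. aopt M ob j z (take (Suc l) p) \<le> amax M ob (j + l) (p ! l)"
  have "aopt1 M ob j z (hd p) / divisor_prod (n - j) p \<le> alpha M ob n (drop (n - j) p)"
    using h[rule_format, of "n - j"] aopt_take[OF p, of "n - j"] amax_last[OF p] j by simp
  then have "aopt1 M ob j z (hd p) \<le> divisor_prod (n - j) p * alpha M ob n (drop (n - j) p)"
    using divisor_prod_pos[OF p, of "n - j"] by (simp add: divide_le_eq mult.commute)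
  then show "aopt1 M ob j z (hd p) \<le> alpha M ob j p" using alpha_eq_divisor_prod[OF p, of "n - j"] j by simp
next
  assume h: "aopt1 M ob j z (hd p) \<le> alpha M ob j p"
  show "\<forall>l\<le>n - j. aopt M ob j z (take (Suc l) p) \<le> amax M ob (j + l) (p ! l)"
  proof (intro allI impI)
    fix l assume l: "l \<le> n - j"
    have "divisor_prod l p * alpha M ob (j + l) (drop l p) \<le> divisor_prod l p * amax M ob (j + l) (p ! l)"
      using alpha_drop_le_amax[OF p l] divisor_prod_pos[OF p l] by (simp add: mult_left_mono)
    then have "aopt1 M ob j z (hd p) \<le> divisor_prod l p * amax M ob (j + l) (p ! l)"
      using h alpha_eq_divisor_prod[OF p l] by simp
    then show "aopt M ob j z (take (Suc l) p) \<le> amax M ob (j + l) (p ! l)"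
      unfolding aopt_take[OF p l] using divisor_prod_pos[OF p l] by (simp add: divide_le_eq mult.commute)
  qed
qed

lemma Mog_subset_xseq: "Mog M ob j z \<subseteq> xseq M j"
  unfolding Mog_def opt_def Pos_def using xseq_Cons[OF j(2)] by auto

definition kept_spec :: "nat \<Rightarrow> 'x list \<Rightarrow> bool" where
  "kept_spec i p \<longleftrightarrow> length p = Suc i \<and> (\<forall>l<Suc i. p ! l \<in> st M (j + l)) \<and>
      (0 < i \<longrightarrow> (\<exists>m\<in>Mog M ob j z. take (Suc i) m = p)) \<and>
      (\<forall>l<Suc i. aopt M ob j z (take (Suc l) p) \<le> amax M ob (j + l) (p ! l))"

lemma kept_spec_snoc:
  "kept_spec (Suc i) (p @ [x]) \<longleftrightarrow>
     kept_spec i p \<and> x \<in> st M (j + Suc i) \<and> (\<exists>m\<in>Mog M ob j z. take (Suc (Suc i)) m = p @ [x]) \<and>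
     aopt M ob j z (p @ [x]) \<le> amax M ob (j + Suc i) x"
proof (cases "length p = Suc i")
  case True
  have take: "take (Suc l) (p @ [x]) = take (Suc l) p" "(p @ [x]) ! l = p ! l" if "l < Suc i" for l
    using that True by (simp_all add: nth_append)
  have last: "take (Suc (Suc i)) (p @ [x]) = p @ [x]" "(p @ [x]) ! Suc i = x" using True by (simp_all add: nth_append)
  have all_Suc: "(\<forall>l<Suc (Suc i). P l) \<longleftrightarrow> (\<forall>l<Suc i. P l) \<and> P (Suc i)" for P
    by (auto simp: less_Suc_eq)
  have "(\<exists>m\<in>Mog M ob j z. take (Suc i) m = p)" if "take (Suc (Suc i)) m = p @ [x]" "m \<in> Mog M ob j z" for m
  proof -
    have "take (Suc i) m = take (Suc i) (take (Suc (Suc i)) m)" by simp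
    also have "\<dots> = p" using that(1) True by simp
    finally show ?thesis using that(2) by blast
  qed
  then show ?thesis unfolding kept_spec_def all_Suc using True take last by auto
next
  case False
  then show ?thesis unfolding kept_spec_def by auto
qed

lemma kept_eq_kept_spec: "kept M ob j z i = {p. kept_spec i p}"
proof (induction i)
  case 0
  show ?case unfolding kept_spec_def by (auto simp: length_Suc_conv)
next
  case (Suc i)
  have "q \<in> kept M ob j z (Suc i) \<longleftrightarrow> kept_spec (Suc i) q" for q
  proof (cases q rule: rev_cases)
    case Nil
    then show ?thesis unfolding kept_spec_def by auto
  next
    case (snoc p x)
    have "q \<in> kept M ob j z (Suc i) \<longleftrightarrow> kept_spec i p \<and> x \<in> st M (j + Suc i) \<and>
        (\<exists>m\<in>Mog M ob j z. take (length (p @ [x])) m = p @ [x]) \<and> aopt M ob j z (p @ [x]) \<le> amax M ob (j + Suc i) x"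
      unfolding kept.simps Suc snoc by auto
    also have "\<dots> \<longleftrightarrow> kept_spec (Suc i) q"
      unfolding snoc kept_spec_snoc by (auto simp: kept_spec_def)
    finally show ?thesis .
  qed
  then show ?case by blast
qed

lemma tree_out_eq_Mog_filter: "tree_out M ob j z = {p \<in> Mog M ob j z. aopt1 M ob j z (hd p) \<le> alpha M ob j p}"
proof -
  have len: "length m = Suc (n - j)" if "m \<in> Mog M ob j z" for m
    using that Mog_subset_xseq length_xseq[of m j] j by (auto simp: Suc_diff_le)
  have entries: "\<forall>l<Suc (n - j). m ! l \<in> st M (j + l)" if "m \<in> Mog M ob j z" for m
    using that Mog_subset_xseq xseq_nth[of m j] len[OF that] by auto
  have "kept_spec (n - j) p \<longleftrightarrow> p \<in> Mog M ob j z \<and>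
          (\<forall>l\<le>n - j. aopt M ob j z (take (Suc l) p) \<le> amax M ob (j + l) (p ! l))" for p
  proof
    assume p: "kept_spec (n - j) p"
    then obtain m where "m \<in> Mog M ob j z" "take (Suc (n - j)) m = p"
      unfolding kept_spec_def using j by auto
    then have "p \<in> Mog M ob j z" using len by auto
    then show "p \<in> Mog M ob j z \<and> (\<forall>l\<le>n - j. aopt M ob j z (take (Suc l) p) \<le> amax M ob (j + l) (p ! l))"
      using p unfolding kept_spec_def by (auto simp: less_Suc_eq_le)
  next
    assume "p \<in> Mog M ob j z \<and> (\<forall>l\<le>n - j. aopt M ob j z (take (Suc l) p) \<le> amax M ob (j + l) (p ! l))"
    then show "kept_spec (n - j) p"
      unfolding kept_spec_def using len entries by (auto simp: less_Suc_eq_le)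
  qed
  then have "tree_out M ob j z = {p \<in> Mog M ob j z. \<forall>l\<le>n - j. aopt M ob j z (take (Suc l) p) \<le> amax M ob (j + l) (p ! l)}"
    unfolding tree_out_def kept_eq_kept_spec by blast
  then show ?thesis using prefix_tests_iff Mog_subset_xseq by blast
qed

end

end

theorem theorem3:
  fixes M :: "('x, 'o) ihmm" and ob :: "nat \<Rightarrow> 'o" and x0 :: 'x
    and k :: nat and z :: 'x
  assumes n_pos: "len M \<ge> 1"
    and X0: "st M 0 = {x0}"
    and finX: "\<forall>i\<in>{1..len M}. finite (st M i) \<and> st M i \<noteq> {}"
    and finO: "\<forall>i\<in>{1..len M}. finite (out M i) \<and> out M i \<noteq> {}"
    and obs: "\<forall>i\<in>{1..len M}. ob i \<in> out M i"
    and cohQ: "\<forall>i\<in>{1..len M}. \<forall>y\<in>st M (i - 1). coherent_lp (st M i) (Qm M i y)"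
    and cohS: "\<forall>i\<in>{1..len M}. \<forall>y\<in>st M i. coherent_lp (out M i) (Sm M i y)"
    and posQ: "\<forall>i\<in>{1..len M}. \<forall>y\<in>st M (i - 1). \<forall>x\<in>st M i.
                 upper (Qm M i y) (indicator {x}) > 0"
    and posS: "\<forall>i\<in>{1..len M}. \<forall>y\<in>st M i. \<forall>u\<in>out M i.
                 upper (Sm M i y) (indicator {u}) > 0"
    and k: "1 \<le> k" "k < len M"
    and z: "z \<in> st M (k - 1)"
  shows "tree_out M ob k z = opt M ob k z"
proof -
  interpret positive_ihmm M ob
    using n_pos finX finO obs cohQ cohS posQ posS by unfold_locales
  interpret ihmm_level_given M ob k z
    using k z E_regular_all[of "Suc k"] by unfold_locales auto
  show ?thesis using tree_out_eq_Mog_filter[OF k] opt_eq_Mog_filter by simp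
qed

end
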